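(* Let $(q_n),(r_n)$ be complex sequences vanishing faster than any negative power of $|n|$ as $n\to\pm\infty$ with $1-q_nr_n\neq0$ and $1+q_nr_{n+1}\ne0$ for all $n$, and let $u_n,v_n,p_n,s_n,D_\infty,E_\infty$ be as in the context. Let $T,\bar T,R,\bar R,L,\bar L$ be the scattering coefficients of system (Q) (where $T=T_{\rm l}=T_{\rm r}$, $\bar T=\bar T_{\rm l}=\bar T_{\rm r}$), and use superscripts $(u,v)$, $(p,s)$ for the scattering coefficients of system (U) with potentials $(u,v)$, $(p,s)$. Then $$T_{\rm l}^{(u,v)}=T_{\rm l}^{(p,s)}=D_\infty T,\quad T_{\rm r}^{(u,v)}=T_{\rm r}^{(p,s)}=\frac{T}{E_\infty},\quad \bar T_{\rm l}^{(u,v)}=\bar T_{\rm l}^{(p,s)}=E_\infty\bar T,\quad \bar T_{\rm r}^{(u,v)}=\bar T_{\rm r}^{(p,s)}=\frac{\bar T}{D_\infty},$$ $$R^{(u,v)}=(1-z^{-2})\frac{D_\infty}{E_\infty}R,\quad R^{(p,s)}=\frac{D_\infty}{E_\infty}R,\quad \bar R^{(u,v)}=\frac{1}{1-z^{-2}}\frac{E_\infty}{D_\infty}\bar R,\quad \bar R^{(p,s)}=\frac{E_\infty}{D_\infty}\bar R,$$ $$L^{(u,v)}=\frac{1}{1-z^{-2}}L,\quad L^{(p,s)}=L,\quad \bar L^{(u,v)}=(1-z^{-2})\bar L,\quad \bar L^{(p,s)}=\bar L.$$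
   Context: System (Q): $\begin{bmatrix}\alpha_n\\ \beta_n\end{bmatrix}=\begin{bmatrix} z & (z-z^{-1})q_n\\ z r_n & z^{-1}+(z-z^{-1})q_nr_n\end{bmatrix}\begin{bmatrix}\alpha_{n+1}\\ \beta_{n+1}\end{bmatrix}$. System (U) with potentials $(a,b)$: $\begin{bmatrix}\xi_n\\ \eta_n\end{bmatrix}=\begin{bmatrix} z & z a_n\\ z^{-1}b_n & z^{-1}\end{bmatrix}\begin{bmatrix}\xi_{n+1}\\ \eta_{n+1}\end{bmatrix}$. Notation: $D_n=\prod_{j\le n}(1-q_jr_j)$, $E_n=\prod_{j\le n}(1+q_jr_{j+1})$, $D_\infty$, $E_\infty$ the full products over $j\in\mathbb Z$; $u_n=q_nE_{n-1}/D_n$, $v_n=(-r_n+r_{n+1}-q_nr_nr_{n+1})D_{n-1}/E_n$, $p_n=(q_n-q_{n+1}-q_nq_{n+1}r_{n+1})E_{n-1}/D_{n+1}$, $s_n=r_{n+1}D_n/E_n$. For each system and $|z|=1$, the Jost solutions (overbars are not complex conjugation) are given by $\psi_n=\begin{bmatrix}o(1)\\ z^n[1+o(1)]\end{bmatrix}$ ($n\to+\infty$), $\phi_n=\begin{bmatrix}z^{-n}[1+o(1)]\\ o(1)\end{bmatrix}$ ($n\to-\infty$), $\bar\psi_n=\begin{bmatrix}z^{-n}[1+o(1)]\\ o(1)\end{bmatrix}$ ($n\to+\infty$), $\bar\phi_n=\begin{bmatrix}o(1)\\ z^{n}[1+o(1)]\end{bmatrix}$ ($n\to-\infty$), and the scattering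 coefficients by $\psi_n=\begin{bmatrix}(L/T_{\rm l})z^{-n}[1+o(1)]\\ (1/T_{\rm l})z^{n}[1+o(1)]\end{bmatrix}$ ($n\to-\infty$), $\phi_n=\begin{bmatrix}(1/T_{\rm r})z^{-n}[1+o(1)]\\ (R/T_{\rm r})z^{n}[1+o(1)]\end{bmatrix}$ ($n\to+\infty$), $\bar\psi_n=\begin{bmatrix}(1/\bar T_{\rm l})z^{-n}[1+o(1)]\\ (\bar L/\bar T_{\rm l})z^{n}[1+o(1)]\end{bmatrix}$ ($n\to-\infty$), $\bar\phi_n=\begin{bmatrix}(\bar R/\bar T_{\rm r})z^{-n}[1+o(1)]\\ (1/\bar T_{\rm r})z^{n}[1+o(1)]\end{bmatrix}$ ($n\to+\infty$). *)

theory Defs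
  imports Complex_Main
begin

text \<open>A 2x2 first-order discrete system X n = M n z * X (n+1); the coefficient matrix
  is given by its four entries (a, b, c, d) = [[a, b], [c, d]].\<close>

type_synonym sys = "int \<Rightarrow> complex \<Rightarrow> complex \<times> complex \<times> complex \<times> complex"

definition solves :: "sys \<Rightarrow> complex \<Rightarrow> (int \<Rightarrow> complex \<times> complex) \<Rightarrow> bool" where
  "solves M z X \<longleftrightarrow> (\<forall>n. case M n z of (a, b, c, d) \<Rightarrow>
      fst (X n) = a * fst (X (n+1)) + b * snd (X (n+1)) \<and>
      snd (X n) = c * fst (X (n+1)) + d * snd (X (n+1)))"

definition sysQ :: "(int \<Rightarrow> complex) \<Rightarrow> (int \<Rightarrow> complex) \<Rightarrow> sys" where
  "sysQ q r = (\<lambda>n z. (z, (z - inverse z) * q n, z * r n, inverse z + (z - inverse z) * q n * r n))"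

definition sysU :: "(int \<Rightarrow> complex) \<Rightarrow> (int \<Rightarrow> complex) \<Rightarrow> sys" where
  "sysU a b = (\<lambda>n z. (z, z * a n, inverse z * b n, inverse z))"

definition is_psi :: "sys \<Rightarrow> complex \<Rightarrow> (int \<Rightarrow> complex \<times> complex) \<Rightarrow> bool" where
  "is_psi M z X \<longleftrightarrow> solves M z X \<and> ((\<lambda>n. fst (X n)) \<longlongrightarrow> 0) at_top
     \<and> ((\<lambda>n. snd (X n) * z powi (-n)) \<longlongrightarrow> 1) at_top"

definition is_phi :: "sys \<Rightarrow> complex \<Rightarrow> (int \<Rightarrow> complex \<times> complex) \<Rightarrow> bool" where
  "is_phi M z X \<longleftrightarrow> solves M z X \<and> ((\<lambda>n. fst (X n) * z powi n) \<longlongrightarrow> 1) at_bot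
     \<and> ((\<lambda>n. snd (X n)) \<longlongrightarrow> 0) at_bot"

definition is_psibar :: "sys \<Rightarrow> complex \<Rightarrow> (int \<Rightarrow> complex \<times> complex) \<Rightarrow> bool" where
  "is_psibar M z X \<longleftrightarrow> solves M z X \<and> ((\<lambda>n. fst (X n) * z powi n) \<longlongrightarrow> 1) at_top
     \<and> ((\<lambda>n. snd (X n)) \<longlongrightarrow> 0) at_top"

definition is_phibar :: "sys \<Rightarrow> complex \<Rightarrow> (int \<Rightarrow> complex \<times> complex) \<Rightarrow> bool" where
  "is_phibar M z X \<longleftrightarrow> solves M z X \<and> ((\<lambda>n. fst (X n)) \<longlongrightarrow> 0) at_bot
     \<and> ((\<lambda>n. snd (X n) * z powi (-n)) \<longlongrightarrow> 1) at_bot"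

definition psi :: "sys \<Rightarrow> complex \<Rightarrow> int \<Rightarrow> complex \<times> complex" where
  "psi M z = (THE X. is_psi M z X)"
definition phi :: "sys \<Rightarrow> complex \<Rightarrow> int \<Rightarrow> complex \<times> complex" where
  "phi M z = (THE X. is_phi M z X)"
definition psibar :: "sys \<Rightarrow> complex \<Rightarrow> int \<Rightarrow> complex \<times> complex" where
  "psibar M z = (THE X. is_psibar M z X)"
definition phibar :: "sys \<Rightarrow> complex \<Rightarrow> int \<Rightarrow> complex \<times> complex" where
  "phibar M z = (THE X. is_phibar M z X)"

definition Tl :: "sys \<Rightarrow> complex \<Rightarrow> complex" where
  "Tl M z = 1 / Lim at_bot (\<lambda>n. snd (psi M z n) * z powi (-n))"
definition Lc :: "sys \<Rightarrow> complex \<Rightarrow> complex" where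
  "Lc M z = Tl M z * Lim at_bot (\<lambda>n. fst (psi M z n) * z powi n)"
definition Tr :: "sys \<Rightarrow> complex \<Rightarrow> complex" where
  "Tr M z = 1 / Lim at_top (\<lambda>n. fst (phi M z n) * z powi n)"
definition Rc :: "sys \<Rightarrow> complex \<Rightarrow> complex" where
  "Rc M z = Tr M z * Lim at_top (\<lambda>n. snd (phi M z n) * z powi (-n))"
definition Tlbar :: "sys \<Rightarrow> complex \<Rightarrow> complex" where
  "Tlbar M z = 1 / Lim at_bot (\<lambda>n. fst (psibar M z n) * z powi n)"
definition Lbar :: "sys \<Rightarrow> complex \<Rightarrow> complex" where
  "Lbar M z = Tlbar M z * Lim at_bot (\<lambda>n. snd (psibar M z n) * z powi (-n))"
definition Trbar :: "sys \<Rightarrow> complex \<Rightarrow> complex" where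
  "Trbar M z = 1 / Lim at_top (\<lambda>n. snd (phibar M z n) * z powi (-n))"
definition Rbar :: "sys \<Rightarrow> complex \<Rightarrow> complex" where
  "Rbar M z = Trbar M z * Lim at_top (\<lambda>n. fst (phibar M z n) * z powi n)"

definition Dp :: "(int \<Rightarrow> complex) \<Rightarrow> (int \<Rightarrow> complex) \<Rightarrow> int \<Rightarrow> complex" where
  "Dp q r n = Lim at_bot (\<lambda>m. \<Prod>j\<in>{m..n}. 1 - q j * r j)"
definition Ep :: "(int \<Rightarrow> complex) \<Rightarrow> (int \<Rightarrow> complex) \<Rightarrow> int \<Rightarrow> complex" where
  "Ep q r n = Lim at_bot (\<lambda>m. \<Prod>j\<in>{m..n}. 1 + q j * r (j+1))"
definition Dinf :: "(int \<Rightarrow> complex) \<Rightarrow> (int \<Rightarrow> complex) \<Rightarrow> complex" where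
  "Dinf q r = Lim at_top (Dp q r)"
definition Einf :: "(int \<Rightarrow> complex) \<Rightarrow> (int \<Rightarrow> complex) \<Rightarrow> complex" where
  "Einf q r = Lim at_top (Ep q r)"

definition uu where "uu q r n = q n * Ep q r (n-1) / Dp q r n"
definition vv where "vv q r n = (- r n + r (n+1) - q n * r n * r (n+1)) * Dp q r (n-1) / Ep q r n"
definition pp where "pp q r n = (q n - q (n+1) - q n * q (n+1) * r (n+1)) * Ep q r (n-1) / Dp q r (n+1)"
definition ss where "ss q r n = r (n+1) * Dp q r n / Ep q r n"

definition rapid_decay :: "(int \<Rightarrow> complex) \<Rightarrow> bool" where
  "rapid_decay f \<longleftrightarrow> (\<forall>k::nat.
     ((\<lambda>n. real_of_int \<bar>n\<bar> ^ k * norm (f n)) \<longlongrightarrow> 0) at_top \<and>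
     ((\<lambda>n. real_of_int \<bar>n\<bar> ^ k * norm (f n)) \<longlongrightarrow> 0) at_bot)"

end

theory Submission
  imports Defs "HOL-Analysis.Summation_Tests"
begin

text \<open>System (Q) is a summable perturbation of the free system \<open>diag(z, 1/z)\<close>. By a discrete
  Gronwall argument the components of every solution, with the free oscillations \<open>z\<^sup>-\<^sup>n\<close> and
  \<open>z\<^sup>n\<close> divided out, converge at both ends, and a solution whose limits vanish at one end is
  zero. Hence the Jost solutions exist and are unique, and since (Q) has determinant one the
  Wronskian gives \<open>T\<^sub>l = T\<^sub>r\<close>. The partial products \<open>D\<^sub>n\<close>, \<open>E\<^sub>n\<close> tend to 1 at
  \<open>-\<infinity>\<close> and to \<open>D\<^sub>\<infinity>, E\<^sub>\<infinity> \<noteq> 0\<close> at \<open>+\<infinity>\<close>. Explicit pointwise gauge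
  transformations built from them map the solutions of (Q) bijectively onto those of (U) with
  potentials \<open>(u, v)\<close>, resp. \<open>(p, s)\<close>, and multiply the two normalised limits by
  \<open>E\<^sub>\<infinity>/(1 - z\<^sup>-\<^sup>2)\<close>, \<open>D\<^sub>\<infinity>\<close> at \<open>+\<infinity>\<close> and by \<open>1/(1 - z\<^sup>-\<^sup>2)\<close>, 1 at \<open>-\<infinity>\<close>,
  resp. by \<open>E\<^sub>\<infinity>\<close>, \<open>D\<^sub>\<infinity>\<close> and 1, 1. So every Jost solution of (U) is a constant multiple
  of the image of the corresponding Jost solution of (Q), and each scattering coefficient
  changes by the matching ratio of these constants.\<close>

section \<open>Sequences indexed by the integers\<close>

lemma filterlim_int_of_nat_at_botD:
  assumes "filterlim (\<lambda>i. f (- int i)) F sequentially"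
  shows "filterlim f F (at_bot :: int filter)"
proof -
  have "filterlim (\<lambda>x. f (- x)) F at_top"
    using assms by (rule filterlim_int_of_nat_at_topD)
  then show ?thesis
    by (simp add: filterlim_def at_bot_mirror filtermap_filtermap)
qed

lemma filterlim_neg_int_sequentially: "filterlim (\<lambda>i. - int i) at_bot sequentially"
  unfolding filterlim_at_bot
proof
  fix Z :: int
  show "eventually (\<lambda>i. - int i \<le> Z) sequentially"
    using eventually_ge_at_top[of "nat (- Z)"] by eventually_elim simp
qed

lemma tendsto_shift_at_top:
  fixes c :: int
  assumes "(f \<longlongrightarrow> L) at_top"
  shows "((\<lambda>n. f (n + c)) \<longlongrightarrow> L) at_top"
proof -
  have "filterlim (\<lambda>n. n + c) at_top at_top"
    unfolding filterlim_at_top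
  proof
    fix Z :: int
    show "eventually (\<lambda>n. Z \<le> n + c) at_top"
      using eventually_ge_at_top[of "Z - c"] by eventually_elim simp
  qed
  then show ?thesis by (rule filterlim_compose[OF assms])
qed

lemma tendsto_shift_at_bot:
  fixes c :: int
  assumes "(f \<longlongrightarrow> L) at_bot"
  shows "((\<lambda>n. f (n + c)) \<longlongrightarrow> L) at_bot"
proof -
  have "filterlim (\<lambda>n. n + c) at_bot at_bot"
    unfolding filterlim_at_bot
  proof
    fix Z :: int
    show "eventually (\<lambda>n. n + c \<le> Z) at_bot"
      using eventually_le_at_bot[of "Z - c"] by eventually_elim simp
  qed
  then show ?thesis by (rule filterlim_compose[OF assms])
qed

lemma Lim_at_top_eqI: "(f \<longlongrightarrow> l) at_top \<Longrightarrow> Lim at_top (f :: int \<Rightarrow> 'a::t2_space) = l"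
  by (rule tendsto_Lim[OF trivial_limit_at_top_linorder])

lemma Lim_at_bot_eqI: "(f \<longlongrightarrow> l) at_bot \<Longrightarrow> Lim at_bot (f :: int \<Rightarrow> 'a::t2_space) = l"
  by (rule tendsto_Lim[OF trivial_limit_at_bot_linorder])

lemma tendsto_zero_iff_norm_eq:
  assumes "\<And>n. norm (f n) = norm (g n)"
  shows "(f \<longlongrightarrow> 0) F \<longleftrightarrow> (g \<longlongrightarrow> 0) F"
proof -
  have "(f \<longlongrightarrow> 0) F \<longleftrightarrow> ((\<lambda>n. norm (f n)) \<longlongrightarrow> 0) F"
    by (rule tendsto_norm_zero_iff[symmetric])
  also have "\<dots> \<longleftrightarrow> (g \<longlongrightarrow> 0) F"
    by (simp only: assms tendsto_norm_zero_iff)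
  finally show ?thesis .
qed

lemma convergent_of_summable_norm_diff:
  fixes g :: "nat \<Rightarrow> 'a::banach"
  assumes "summable (\<lambda>i. norm (g i - g (Suc i)))"
  shows "convergent g"
proof -
  have "summable (\<lambda>i. g i - g (Suc i))"
    using assms by (rule summable_norm_cancel)
  then have "(\<lambda>m. g 0 - (\<Sum>i<m. g i - g (Suc i))) \<longlonglongrightarrow> g 0 - (\<Sum>i. g i - g (Suc i))"
    by (intro tendsto_diff tendsto_const summable_LIMSEQ)
  moreover have "(\<lambda>m. g 0 - (\<Sum>i<m. g i - g (Suc i))) = g"
    by (simp add: fun_eq_iff sum_lessThan_telescope')
  ultimately show ?thesis by (auto simp: convergent_def)
qed

section \<open>Summable weights on the integers\<close>

definition nonneg_summable_int :: "(int \<Rightarrow> real) \<Rightarrow> bool" where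
  "nonneg_summable_int k \<longleftrightarrow>
     (\<forall>n. 0 \<le> k n) \<and> summable (\<lambda>i. k (int i)) \<and> summable (\<lambda>i. k (- int i))"

lemma nonneg_summable_int_nonneg: "nonneg_summable_int k \<Longrightarrow> 0 \<le> k n"
  by (simp add: nonneg_summable_int_def)

lemma nonneg_summable_int_interval_sums_bounded:
  assumes "nonneg_summable_int k"
  obtains S where "\<And>m n. sum k {m..<n} \<le> S"
proof
  fix m n :: int
  define N where "N = nat \<bar>m\<bar> + nat \<bar>n\<bar> + 1"
  have k0: "\<And>j. 0 \<le> k j" using assms by (simp add: nonneg_summable_int_def)
  have "{m..<n} \<subseteq> int ` {..<N} \<union> (\<lambda>i. - int i) ` {..<N}"
  proof
    fix x assume x: "x \<in> {m..<n}"
    show "x \<in> int ` {..<N} \<union> (\<lambda>i. - int i) ` {..<N}"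
    proof (cases "0 \<le> x")
      case True
      then have "x = int (nat x)" "nat x < N" using x by (auto simp: N_def)
      then show ?thesis by blast
    next
      case False
      then have "x = - int (nat (- x))" "nat (- x) < N" using x by (auto simp: N_def)
      then show ?thesis by blast
    qed
  qed
  then have "sum k {m..<n} \<le> sum k (int ` {..<N} \<union> (\<lambda>i. - int i) ` {..<N})"
    by (intro sum_mono2) (auto simp: k0)
  also have "\<dots> \<le> sum k (int ` {..<N}) + sum k ((\<lambda>i. - int i) ` {..<N})"
    by (subst sum_Un) (auto intro: sum_nonneg simp: k0)
  also have "\<dots> = (\<Sum>i<N. k (int i)) + (\<Sum>i<N. k (- int i))"
    by (simp add: sum.reindex inj_on_def)
  also have "\<dots> \<le> (\<Sum>i. k (int i)) + (\<Sum>i. k (- int i))"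
    using assms by (intro add_mono sum_le_suminf) (auto simp: nonneg_summable_int_def)
  finally show "sum k {m..<n} \<le> (\<Sum>i. k (int i)) + (\<Sum>i. k (- int i))" .
qed

lemma nonneg_summable_int_add:
  "nonneg_summable_int a \<Longrightarrow> nonneg_summable_int b \<Longrightarrow> nonneg_summable_int (\<lambda>n. a n + b n)"
  by (auto simp: nonneg_summable_int_def intro: summable_add)

lemma nonneg_summable_int_cmult:
  "0 \<le> c \<Longrightarrow> nonneg_summable_int a \<Longrightarrow> nonneg_summable_int (\<lambda>n. c * a n)"
  by (auto simp: nonneg_summable_int_def intro: summable_mult)

lemma nonneg_summable_int_mult_tendsto_zero:
  assumes a: "nonneg_summable_int a" and b: "\<And>n. 0 \<le> b n"
    and "(b \<longlongrightarrow> 0) at_top" and "(b \<longlongrightarrow> 0) at_bot"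
  shows "nonneg_summable_int (\<lambda>n. a n * b n)"
proof -
  have a0: "\<And>n. 0 \<le> a n" using a by (simp add: nonneg_summable_int_def)
  have half: "summable (\<lambda>i. a (h i) * b (h i))"
    if "summable (\<lambda>i. a (h i))" and "(\<lambda>i. b (h i)) \<longlonglongrightarrow> 0" for h :: "nat \<Rightarrow> int"
  proof (rule summable_comparison_test_ev[OF _ that(1)])
    have "eventually (\<lambda>i. b (h i) < 1) sequentially"
      using that(2) by (rule order_tendstoD) simp
    then show "eventually (\<lambda>i. norm (a (h i) * b (h i)) \<le> a (h i)) sequentially"
      by eventually_elim (use a0 b in \<open>auto intro: mult_left_le\<close>)
  qed
  have "summable (\<lambda>i. a (int i) * b (int i))"
    using a assms(3) by (intro half filterlim_compose[OF _ filterlim_int_sequentially])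
      (auto simp: nonneg_summable_int_def)
  moreover have "summable (\<lambda>i. a (- int i) * b (- int i))"
    using a assms(4) by (intro half filterlim_compose[OF _ filterlim_neg_int_sequentially])
      (auto simp: nonneg_summable_int_def)
  ultimately show ?thesis using a0 b by (simp add: nonneg_summable_int_def)
qed

lemma nonneg_summable_int_shift:
  assumes "nonneg_summable_int k"
  shows "nonneg_summable_int (\<lambda>n. k (n + 1))"
proof -
  have "summable (\<lambda>i. k (int (Suc i)))"
    using assms summable_Suc_iff[of "\<lambda>i. k (int i)"] by (simp add: nonneg_summable_int_def)
  moreover have "summable (\<lambda>i. k (- int i + 1))"
    using assms summable_Suc_iff[of "\<lambda>i. k (- int i + 1)"]
    by (simp add: nonneg_summable_int_def)
  ultimately show ?thesis
    using assms by (simp add: nonneg_summable_int_def add.commute)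
qed

lemma nonneg_summable_int_norm_one_minus_inverse:
  fixes a :: "int \<Rightarrow> 'a::real_normed_field"
  assumes nz: "\<And>n. a n \<noteq> 0" and s: "nonneg_summable_int (\<lambda>n. norm (1 - a n))"
  shows "nonneg_summable_int (\<lambda>n. norm (1 - inverse (a n)))"
proof -
  have half: "summable (\<lambda>i. norm (1 - inverse (a (h i))))"
    if sh: "summable (\<lambda>i. norm (1 - a (h i)))" for h :: "nat \<Rightarrow> int"
  proof (rule summable_comparison_test_ev[OF _ summable_mult[OF sh, of 2]])
    have "eventually (\<lambda>i. norm (1 - a (h i)) < 1/2) sequentially"
      using summable_LIMSEQ_zero[OF sh] by (rule order_tendstoD) simp
    then show "eventually (\<lambda>i. norm (norm (1 - inverse (a (h i)))) \<le> 2 * norm (1 - a (h i)))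
        sequentially"
    proof eventually_elim
      case (elim i)
      have "1 \<le> norm (a (h i)) + norm (1 - a (h i))"
        using norm_triangle_ineq[of "a (h i)" "1 - a (h i)"] by simp
      then have "1/2 \<le> norm (a (h i))" using elim by simp
      moreover have "1 - inverse (a (h i)) = - ((1 - a (h i)) / a (h i))"
        using nz[of "h i"] by (simp add: field_simps)
      then have "norm (1 - inverse (a (h i))) = norm (1 - a (h i)) / norm (a (h i))"
        by (simp add: norm_divide)
      ultimately have "norm (1 - inverse (a (h i))) \<le> norm (1 - a (h i)) / (1/2)"
        using divide_left_mono[of "1/2" "norm (a (h i))" "norm (1 - a (h i))"] nz[of "h i"] by simp
      then show ?case by simp
    qed
  qed
  then show ?thesis
    using s by (simp add: nonneg_summable_int_def)
qed

lemma tendsto_zero_of_rapid_decay: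
  assumes "rapid_decay f"
  shows "(f \<longlongrightarrow> 0) at_top" and "(f \<longlongrightarrow> 0) at_bot"
  using assms[unfolded rapid_decay_def, rule_format, of 0]
  by (simp_all add: tendsto_norm_zero_iff)

lemma nonneg_summable_int_rapid_decay:
  assumes "rapid_decay f"
  shows "nonneg_summable_int (\<lambda>n. norm (f n))"
proof -
  have half: "summable (\<lambda>i. norm (f (h i)))"
    if lim: "(\<lambda>i. real_of_int \<bar>h i\<bar> ^ 2 * norm (f (h i))) \<longlonglongrightarrow> 0"
      and h: "\<And>i. \<bar>h i\<bar> = int i" for h :: "nat \<Rightarrow> int"
  proof (rule summable_comparison_test_ev[OF _ inverse_power_summable[of 2]])
    have "eventually (\<lambda>i. real_of_int \<bar>h i\<bar> ^ 2 * norm (f (h i)) < 1) sequentially"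
      using lim by (rule order_tendstoD) simp
    then show "eventually (\<lambda>i. norm (norm (f (h i))) \<le> inverse (real i ^ 2)) sequentially"
      using eventually_gt_at_top[of "0::nat"]
      by eventually_elim (simp add: h field_simps)
  qed simp
  have "((\<lambda>n. real_of_int \<bar>n\<bar> ^ 2 * norm (f n)) \<longlongrightarrow> 0) at_top"
    and "((\<lambda>n. real_of_int \<bar>n\<bar> ^ 2 * norm (f n)) \<longlongrightarrow> 0) at_bot"
    using assms unfolding rapid_decay_def by blast+
  then have "summable (\<lambda>i. norm (f (int i)))" and "summable (\<lambda>i. norm (f (- int i)))"
    by (auto intro!: half filterlim_compose[OF _ filterlim_int_sequentially]
        filterlim_compose[OF _ filterlim_neg_int_sequentially])
  then show ?thesis by (simp add: nonneg_summable_int_def)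
qed

section \<open>Discrete Gronwall estimates\<close>

lemma gronwall_backward:
  fixes N k :: "int \<Rightarrow> real"
  assumes backward: "\<And>n. N n \<le> (1 + k n) * N (n + 1)"
    and N0: "\<And>n. 0 \<le> N n" and k0: "\<And>n. 0 \<le> k n" and "n \<le> m"
  shows "N n \<le> exp (sum k {n..<m}) * N m"
  using \<open>n \<le> m\<close>
proof (induction n rule: int_le_induct)
  case base
  then show ?case by simp
next
  case (step i)
  have "N (i - 1) \<le> (1 + k (i - 1)) * N i"
    using backward[of "i - 1"] by simp
  also have "\<dots> \<le> exp (k (i - 1)) * (exp (sum k {i..<m}) * N m)"
    using step.IH by (intro mult_mono) (auto simp: N0 k0 add.commute)
  also have "{i - 1..<m} = insert (i - 1) {i..<m}"
    using step.hyps by auto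
  then have "exp (k (i - 1)) * (exp (sum k {i..<m}) * N m) = exp (sum k {i - 1..<m}) * N m"
    by (simp add: exp_add)
  finally show ?case .
qed

lemma gronwall_forward:
  fixes N k :: "int \<Rightarrow> real"
  assumes forward: "\<And>n. N (n + 1) \<le> (1 + k n) * N n"
    and N0: "\<And>n. 0 \<le> N n" and k0: "\<And>n. 0 \<le> k n" and "n \<le> m"
  shows "N m \<le> exp (sum k {n..<m}) * N n"
  using \<open>n \<le> m\<close>
proof (induction m rule: int_ge_induct)
  case base
  then show ?case by simp
next
  case (step i)
  have "N (i + 1) \<le> (1 + k i) * N i"
    by (rule forward)
  also have "\<dots> \<le> exp (k i) * (exp (sum k {n..<i}) * N n)"
    using step.IH by (intro mult_mono) (auto simp: N0 k0 add.commute)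
  also have "{n..<i + 1} = insert i {n..<i}"
    using step.hyps by auto
  then have "exp (k i) * (exp (sum k {n..<i}) * N n) = exp (sum k {n..<i + 1}) * N n"
    by (simp add: exp_add)
  finally show ?case .
qed

lemma gronwall_two_sided:
  fixes N k :: "int \<Rightarrow> real"
  assumes "\<And>n. N n \<le> (1 + k n) * N (n + 1)" and "\<And>n. N (n + 1) \<le> (1 + k n) * N n"
    and N0: "\<And>n. 0 \<le> N n" and "\<And>n. 0 \<le> k n" and S: "\<And>m n. sum k {m..<n} \<le> S"
  shows "N n \<le> exp S * N m"
proof (cases "n \<le> m")
  case True
  then have "N n \<le> exp (sum k {n..<m}) * N m"
    using assms by (intro gronwall_backward)
  also have "\<dots> \<le> exp S * N m"
    by (intro mult_right_mono N0) (simp add: S)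
  finally show ?thesis .
next
  case False
  then have "N n \<le> exp (sum k {m..<n}) * N m"
    using assms by (intro gronwall_forward) auto
  also have "\<dots> \<le> exp S * N m"
    by (intro mult_right_mono N0) (simp add: S)
  finally show ?thesis .
qed

lemma convergent_at_top_at_bot_of_increments:
  fixes f :: "int \<Rightarrow> 'a::banach"
  assumes k: "nonneg_summable_int k" and incr: "\<And>n. norm (f n - f (n + 1)) \<le> B * k n"
  shows "\<exists>L. (f \<longlongrightarrow> L) at_top" and "\<exists>L. (f \<longlongrightarrow> L) at_bot"
proof -
  have "summable (\<lambda>i. norm (f (int i) - f (int (Suc i))))"
  proof (rule summable_comparison_test'[where N = 0])
    show "summable (\<lambda>i. B * k (int i))"
      using k by (intro summable_mult) (simp add: nonneg_summable_int_def)
    show "norm (norm (f (int i) - f (int (Suc i)))) \<le> B * k (int i)" for i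
      using incr[of "int i"] by (simp add: add.commute)
  qed
  then have "convergent (\<lambda>i. f (int i))"
    by (rule convergent_of_summable_norm_diff)
  then show "\<exists>L. (f \<longlongrightarrow> L) at_top"
    by (auto simp: convergent_def intro: filterlim_int_of_nat_at_topD)
  have "summable (\<lambda>i. norm (f (- int i) - f (- int (Suc i))))"
  proof (rule summable_comparison_test'[where N = 0])
    show "summable (\<lambda>i. B * k (- int (Suc i)))"
      using k summable_Suc_iff[of "\<lambda>i. k (- int i)"]
      by (intro summable_mult) (simp add: nonneg_summable_int_def)
    show "norm (norm (f (- int i) - f (- int (Suc i)))) \<le> B * k (- int (Suc i))" for i
      using incr[of "- int (Suc i)"] by (simp add: norm_minus_commute)
  qed
  then have "convergent (\<lambda>i. f (- int i))"
    by (rule convergent_of_summable_norm_diff)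
  then show "\<exists>L. (f \<longlongrightarrow> L) at_bot"
    by (auto simp: convergent_def intro: filterlim_int_of_nat_at_botD)
qed

section \<open>Infinite products over the lower half-line\<close>

definition prod_upto :: "(int \<Rightarrow> 'a::{real_normed_field,banach}) \<Rightarrow> int \<Rightarrow> 'a" where
  "prod_upto a n = Lim at_bot (\<lambda>m. \<Prod>j\<in>{m..n}. a j)"

lemma prod_int_interval_split:
  fixes a :: "int \<Rightarrow> 'a::comm_monoid_mult"
  assumes "m \<le> n + 1" and "n \<le> p"
  shows "(\<Prod>j\<in>{m..p}. a j) = (\<Prod>j\<in>{m..n}. a j) * (\<Prod>j\<in>{n + 1..p}. a j)"
proof -
  have "{m..p} = {m..n} \<union> {n + 1..p}" and "{m..n} \<inter> {n + 1..p} = {}"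
    using assms by auto
  then show ?thesis by (simp add: prod.union_disjoint)
qed

lemma partial_prod_bounded:
  fixes b :: "int \<Rightarrow> 'a::real_normed_field"
  assumes "nonneg_summable_int (\<lambda>n. norm (1 - b n))"
  obtains C where "\<And>m n. norm (\<Prod>j\<in>{m..n}. b j) \<le> C"
proof -
  obtain S where S: "\<And>m n. (\<Sum>j\<in>{m..<n}. norm (1 - b j)) \<le> S"
    using nonneg_summable_int_interval_sums_bounded[OF assms] by blast
  have "norm (\<Prod>j\<in>{m..n}. b j) \<le> exp S" for m n
  proof (cases "m \<le> n + 1")
    case True
    have step: "norm (\<Prod>j\<in>{i..n}. b j) \<le> (1 + norm (1 - b i)) * norm (\<Prod>j\<in>{i + 1..n}. b j)"
      for i
    proof (cases "i \<le> n")
      case True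
      have "norm (b i) \<le> 1 + norm (1 - b i)"
        using norm_triangle_ineq4[of 1 "1 - b i"] by simp
      then show ?thesis
        using True prod_int_interval_split[of i i n b]
        by (simp add: norm_mult mult_right_mono)
    qed simp
    have "norm (\<Prod>j\<in>{m..n}. b j) \<le> exp (\<Sum>j\<in>{m..<n + 1}. norm (1 - b j)) * norm (\<Prod>j\<in>{n + 1..n}. b j)"
      using True by (intro gronwall_backward[where N = "\<lambda>i. norm (\<Prod>j\<in>{i..n}. b j)"] step) auto
    also have "\<dots> \<le> exp S"
      by (simp add: S)
    finally show ?thesis .
  next
    case False
    then show ?thesis
      using S[of 0 0] by simp
  qed
  then show ?thesis by (rule that)
qed

lemma partial_prod_convergent_at_bot:
  fixes b :: "int \<Rightarrow> 'a::{real_normed_field,banach}"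
  assumes summable: "nonneg_summable_int (\<lambda>n. norm (1 - b n))"
  shows "\<exists>L. ((\<lambda>m. \<Prod>j\<in>{m..n}. b j) \<longlongrightarrow> L) at_bot"
proof -
  obtain C where C: "\<And>m n. norm (\<Prod>j\<in>{m..n}. b j) \<le> C"
    using partial_prod_bounded[OF summable] by blast
  have "norm ((\<Prod>j\<in>{m..n}. b j) - (\<Prod>j\<in>{m + 1..n}. b j)) \<le> C * norm (1 - b m)" for m
  proof (cases "m \<le> n")
    case True
    then have "(\<Prod>j\<in>{m..n}. b j) - (\<Prod>j\<in>{m + 1..n}. b j) = - ((1 - b m) * (\<Prod>j\<in>{m + 1..n}. b j))"
      using prod_int_interval_split[of m m n b] by (simp add: algebra_simps)
    then show ?thesis
      using mult_left_mono[OF C[of "m + 1" n] norm_ge_zero[of "1 - b m"]]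
      by (simp add: norm_mult mult.commute)
  qed (use C[of 1 0] in simp)
  then show ?thesis
    using summable by (rule convergent_at_top_at_bot_of_increments(2)[rotated])
qed

context
  fixes a :: "int \<Rightarrow> 'a::{real_normed_field,banach}"
  assumes nonzero: "\<And>n. a n \<noteq> 0" and summable: "nonneg_summable_int (\<lambda>n. norm (1 - a n))"
begin

lemma tendsto_prod_upto: "((\<lambda>m. \<Prod>j\<in>{m..n}. a j) \<longlongrightarrow> prod_upto a n) at_bot"
proof -
  obtain L where L: "((\<lambda>m. \<Prod>j\<in>{m..n}. a j) \<longlongrightarrow> L) at_bot"
    using partial_prod_convergent_at_bot[OF summable] by blast
  moreover have "prod_upto a n = L"
    unfolding prod_upto_def by (rule Lim_at_bot_eqI[OF L])
  ultimately show ?thesis by simp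
qed

lemma prod_upto_split:
  assumes "n \<le> p"
  shows "prod_upto a p = prod_upto a n * (\<Prod>j\<in>{n + 1..p}. a j)"
proof -
  have "((\<lambda>m. (\<Prod>j\<in>{m..n}. a j) * (\<Prod>j\<in>{n + 1..p}. a j))
      \<longlongrightarrow> prod_upto a n * (\<Prod>j\<in>{n + 1..p}. a j)) at_bot"
    by (intro tendsto_mult tendsto_const tendsto_prod_upto)
  moreover have "eventually (\<lambda>m. (\<Prod>j\<in>{m..n}. a j) * (\<Prod>j\<in>{n + 1..p}. a j)
      = (\<Prod>j\<in>{m..p}. a j)) at_bot"
    using eventually_le_at_bot[of n]
    by eventually_elim (rule prod_int_interval_split[symmetric], use assms in auto)
  ultimately have "((\<lambda>m. \<Prod>j\<in>{m..p}. a j) \<longlongrightarrow> prod_upto a n * (\<Prod>j\<in>{n + 1..p}. a j)) at_bot"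
    by (rule Lim_transform_eventually)
  then show ?thesis
    using tendsto_prod_upto by (rule tendsto_unique[OF trivial_limit_at_bot_linorder, symmetric])
qed

lemma prod_upto_rec: "prod_upto a n = a n * prod_upto a (n - 1)"
  using prod_upto_split[of "n - 1" n] by (simp add: mult.commute)

lemma partial_prod_bounded_below:
  obtains c where "0 < c" and "\<And>m n. c \<le> norm (\<Prod>j\<in>{m..n}. a j)"
proof -
  have "nonneg_summable_int (\<lambda>n. norm (1 - inverse (a n)))"
    by (rule nonneg_summable_int_norm_one_minus_inverse[OF nonzero summable])
  from partial_prod_bounded[OF this]
  obtain C where C: "\<And>m n. norm (\<Prod>j\<in>{m..n}. inverse (a j)) \<le> C"
    by blast
  have "0 < C"
    using C[of 1 0] by simp
  moreover have "inverse C \<le> norm (\<Prod>j\<in>{m..n}. a j)" for m n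
  proof -
    have "inverse (norm (\<Prod>j\<in>{m..n}. a j)) \<le> C"
      using C[of m n] by (simp add: prod_inversef[of a, unfolded comp_def] norm_inverse)
    moreover have "0 < inverse (norm (\<Prod>j\<in>{m..n}. a j))"
      using nonzero by simp
    ultimately show ?thesis
      using le_imp_inverse_le by fastforce
  qed
  ultimately show ?thesis
    using that[of "inverse C"] by simp
qed

lemma prod_upto_bounds:
  obtains c C where "0 < c" and "\<And>n. c \<le> norm (prod_upto a n)" and "\<And>n. norm (prod_upto a n) \<le> C"
proof -
  obtain c where "0 < c" and c: "\<And>m n. c \<le> norm (\<Prod>j\<in>{m..n}. a j)"
    using partial_prod_bounded_below by blast
  obtain C where C: "\<And>m n. norm (\<Prod>j\<in>{m..n}. a j) \<le> C"
    using partial_prod_bounded[OF summable] by blast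
  have "c \<le> norm (prod_upto a n)" for n
    using tendsto_norm[OF tendsto_prod_upto] by (rule tendsto_lowerbound) (simp_all add: c)
  moreover have "norm (prod_upto a n) \<le> C" for n
    using tendsto_norm[OF tendsto_prod_upto] by (rule tendsto_upperbound) (simp_all add: C)
  ultimately show ?thesis
    using that \<open>0 < c\<close> by blast
qed

lemma prod_upto_nonzero: "prod_upto a n \<noteq> 0"
  using prod_upto_bounds by (metis norm_zero not_le)

lemma prod_upto_convergent: "\<exists>L. (prod_upto a \<longlongrightarrow> L) at_top" "\<exists>L. (prod_upto a \<longlongrightarrow> L) at_bot"
proof -
  obtain C where C: "\<And>n. norm (prod_upto a n) \<le> C"
    using prod_upto_bounds by blast
  have "norm (prod_upto a n - prod_upto a (n + 1)) \<le> C * norm (1 - a (n + 1))" for n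
  proof -
    have "prod_upto a n - prod_upto a (n + 1) = (1 - a (n + 1)) * prod_upto a n"
      using prod_upto_rec[of "n + 1"] by (simp add: algebra_simps)
    then show ?thesis
      using mult_left_mono[OF C[of n] norm_ge_zero[of "1 - a (n + 1)"]]
      by (simp add: norm_mult mult.commute)
  qed
  moreover have "nonneg_summable_int (\<lambda>n. norm (1 - a (n + 1)))"
    using nonneg_summable_int_shift[OF summable] .
  ultimately show "\<exists>L. (prod_upto a \<longlongrightarrow> L) at_top" "\<exists>L. (prod_upto a \<longlongrightarrow> L) at_bot"
    using convergent_at_top_at_bot_of_increments by blast+
qed

lemma prod_upto_tendsto_one_at_bot: "(prod_upto a \<longlongrightarrow> 1) at_bot"
proof -
  \<comment> \<open>Let \<open>n\<close> tend to \<open>-\<infinity>\<close> in \<open>prod_upto_split\<close> with \<open>p = 0\<close>.\<close>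
  obtain L where L: "(prod_upto a \<longlongrightarrow> L) at_bot"
    using prod_upto_convergent by blast
  have "((\<lambda>n. prod_upto a n * (\<Prod>j\<in>{n + 1..0}. a j)) \<longlongrightarrow> L * prod_upto a 0) at_bot"
    by (intro tendsto_mult L tendsto_shift_at_bot[where f = "\<lambda>m. \<Prod>j\<in>{m..0}. a j"]
        tendsto_prod_upto)
  moreover have "eventually (\<lambda>n. prod_upto a n * (\<Prod>j\<in>{n + 1..0}. a j) = prod_upto a 0) at_bot"
    using eventually_le_at_bot[of 0]
  proof eventually_elim
    case (elim n)
    show ?case
      using prod_upto_split[OF elim] by simp
  qed
  then have "((\<lambda>n. prod_upto a n * (\<Prod>j\<in>{n + 1..0}. a j)) \<longlongrightarrow> prod_upto a 0) at_bot"
    by (rule tendsto_eventually)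
  ultimately have "L * prod_upto a 0 = prod_upto a 0"
    by (rule tendsto_unique[OF trivial_limit_at_bot_linorder])
  then show ?thesis
    using L prod_upto_nonzero[of 0] by simp
qed

lemma prod_upto_tendsto_at_top: "(prod_upto a \<longlongrightarrow> Lim at_top (prod_upto a)) at_top"
  using prod_upto_convergent(1) Lim_at_top_eqI by metis

lemma prod_upto_Lim_at_top_nonzero: "Lim at_top (prod_upto a) \<noteq> 0"
proof -
  obtain c where "0 < c" and c: "\<And>n. c \<le> norm (prod_upto a n)"
    using prod_upto_bounds by blast
  have "c \<le> norm (Lim at_top (prod_upto a))"
    using tendsto_norm[OF prod_upto_tendsto_at_top] by (rule tendsto_lowerbound) (simp_all add: c)
  then show ?thesis
    using \<open>0 < c\<close> by auto
qed

end

section \<open>Solutions of first-order 2x2 systems\<close>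

definition sys_step :: "sys \<Rightarrow> complex \<Rightarrow> int \<Rightarrow> complex \<times> complex \<Rightarrow> complex \<times> complex" where
  "sys_step M z n v = (case M n z of (a, b, c, d) \<Rightarrow> (a * fst v + b * snd v, c * fst v + d * snd v))"

lemma solves_iff_sys_step: "solves M z X \<longleftrightarrow> (\<forall>n. X n = sys_step M z n (X (n + 1)))"
  by (auto simp: solves_def sys_step_def prod_eq_iff split: prod.splits)

definition unimodular :: "sys \<Rightarrow> complex \<Rightarrow> bool" where
  "unimodular M z \<longleftrightarrow> (\<forall>n. case M n z of (a, b, c, d) \<Rightarrow> a * d - b * c = 1)"

lemma exists_two_sided_orbit:
  fixes f g :: "int \<Rightarrow> 'a \<Rightarrow> 'a"
  assumes right_inverse: "\<And>n v. f n (g n v) = v"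
  shows "\<exists>X. X 0 = c \<and> (\<forall>n. X n = f n (X (n + 1)))"
proof -
  define fwd where "fwd = rec_nat c (\<lambda>i v. g (int i) v)"
  define bwd where "bwd = rec_nat c (\<lambda>i v. f (- int i - 1) v)"
  define X where "X n = (if 0 \<le> n then fwd (nat n) else bwd (nat (- n)))" for n
  have "X n = f n (X (n + 1))" for n
  proof (cases "0 \<le> n")
    case True
    then have "X (n + 1) = g n (X n)"
      by (simp add: X_def fwd_def nat_add_distrib)
    then show ?thesis by (simp add: right_inverse)
  next
    case False
    then have "nat (- n) = Suc (nat (- n - 1))" and "- int (nat (- n - 1)) - 1 = n"
      by auto
    then have "X n = f n (bwd (nat (- n - 1)))"
      using False by (simp add: X_def bwd_def)
    moreover have "X (n + 1) = bwd (nat (- n - 1))"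
      using False by (auto simp: X_def bwd_def fwd_def nat_diff_distrib)
    ultimately show ?thesis by simp
  qed
  moreover have "X 0 = c"
    by (simp add: X_def fwd_def)
  ultimately show ?thesis by blast
qed

lemma unimodular_exists_solution:
  assumes "unimodular M z"
  shows "\<exists>X. solves M z X \<and> X 0 = c"
proof -
  define g where "g n v = (case M n z of (a, b, c, d) \<Rightarrow> (d * fst v - b * snd v, a * snd v - c * fst v))"
    for n v
  have "sys_step M z n (g n v) = v" for n v
  proof -
    obtain a b c d where M: "M n z = (a, b, c, d)"
      using prod_cases4 by blast
    then have det: "a * d - b * c = 1"
      using assms by (auto simp: unimodular_def dest: spec[of _ n])
    have "a * (d * x - b * y) + b * (a * y - c * x) = (a * d - b * c) * x"
      and "c * (d * x - b * y) + d * (a * y - c * x) = (a * d - b * c) * y" for x y :: complex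
      by algebra+
    then show ?thesis
      by (simp add: sys_step_def g_def M det prod_eq_iff)
  qed
  then show ?thesis
    using exists_two_sided_orbit[of "sys_step M z" g c] by (auto simp: solves_iff_sys_step)
qed

definition lin_comb ::
    "complex \<Rightarrow> complex \<Rightarrow> (int \<Rightarrow> complex \<times> complex) \<Rightarrow> (int \<Rightarrow> complex \<times> complex) \<Rightarrow> int \<Rightarrow> complex \<times> complex"
  where "lin_comb a b X Y n = (a * fst (X n) + b * fst (Y n), a * snd (X n) + b * snd (Y n))"

lemma solves_lin_comb:
  assumes "solves M z X" and "solves M z Y"
  shows "solves M z (lin_comb a b X Y)"
  unfolding solves_iff_sys_step
proof
  fix n
  obtain a' b' c' d' where M: "M n z = (a', b', c', d')"
    using prod_cases4 by blast
  have "X n = sys_step M z n (X (n + 1))" and "Y n = sys_step M z n (Y (n + 1))"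
    using assms unfolding solves_iff_sys_step by blast+
  then show "lin_comb a b X Y n = sys_step M z n (lin_comb a b X Y (n + 1))"
    by (simp add: lin_comb_def sys_step_def M prod_eq_iff algebra_simps)
qed

text \<open>The components of a solution with the oscillations \<open>z\<^sup>-\<^sup>n\<close>, \<open>z\<^sup>n\<close> of the free
  system divided out; the Jost conditions and the scattering coefficients are limits of these.\<close>

definition nfst :: "complex \<Rightarrow> (int \<Rightarrow> complex \<times> complex) \<Rightarrow> int \<Rightarrow> complex" where
  "nfst z X n = fst (X n) * z powi n"

definition nsnd :: "complex \<Rightarrow> (int \<Rightarrow> complex \<times> complex) \<Rightarrow> int \<Rightarrow> complex" where
  "nsnd z X n = snd (X n) * z powi (- n)"

lemma nfst_lin_comb: "nfst z (lin_comb a b X Y) n = a * nfst z X n + b * nfst z Y n"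
  and nsnd_lin_comb: "nsnd z (lin_comb a b X Y) n = a * nsnd z X n + b * nsnd z Y n"
  by (simp_all add: nfst_def nsnd_def lin_comb_def algebra_simps)

lemma tendsto_lin_comb:
  assumes "(nfst z X \<longlongrightarrow> a1) F" "(nsnd z X \<longlongrightarrow> b1) F"
    and "(nfst z Y \<longlongrightarrow> a2) F" "(nsnd z Y \<longlongrightarrow> b2) F"
  shows "(nfst z (lin_comb c d X Y) \<longlongrightarrow> c * a1 + d * a2) F"
    and "(nsnd z (lin_comb c d X Y) \<longlongrightarrow> c * b1 + d * b2) F"
  unfolding nfst_lin_comb[abs_def] nsnd_lin_comb[abs_def] by (intro tendsto_intros assms)+

lemma
  assumes "norm z = 1"
  shows tendsto_zero_fst_iff_nfst: "((\<lambda>n. fst (X n)) \<longlongrightarrow> 0) F \<longleftrightarrow> (nfst z X \<longlongrightarrow> 0) F"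
    and tendsto_zero_snd_iff_nsnd: "((\<lambda>n. snd (X n)) \<longlongrightarrow> 0) F \<longleftrightarrow> (nsnd z X \<longlongrightarrow> 0) F"
  by (intro tendsto_zero_iff_norm_eq; simp add: nfst_def nsnd_def norm_mult norm_power_int assms)+

context
  fixes z :: complex
  assumes norm_z: "norm z = 1"
begin

lemma is_psi_iff: "is_psi M z X \<longleftrightarrow> solves M z X \<and> (nfst z X \<longlongrightarrow> 0) at_top \<and> (nsnd z X \<longlongrightarrow> 1) at_top"
  unfolding is_psi_def tendsto_zero_fst_iff_nfst[OF norm_z] by (simp add: nsnd_def[abs_def])

lemma is_phi_iff: "is_phi M z X \<longleftrightarrow> solves M z X \<and> (nfst z X \<longlongrightarrow> 1) at_bot \<and> (nsnd z X \<longlongrightarrow> 0) at_bot"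
  unfolding is_phi_def tendsto_zero_snd_iff_nsnd[OF norm_z] by (simp add: nfst_def[abs_def])

lemma is_psibar_iff: "is_psibar M z X \<longleftrightarrow> solves M z X \<and> (nfst z X \<longlongrightarrow> 1) at_top \<and> (nsnd z X \<longlongrightarrow> 0) at_top"
  unfolding is_psibar_def tendsto_zero_snd_iff_nsnd[OF norm_z] by (simp add: nfst_def[abs_def])

lemma is_phibar_iff: "is_phibar M z X \<longleftrightarrow> solves M z X \<and> (nfst z X \<longlongrightarrow> 0) at_bot \<and> (nsnd z X \<longlongrightarrow> 1) at_bot"
  unfolding is_phibar_def tendsto_zero_fst_iff_nfst[OF norm_z] by (simp add: nsnd_def[abs_def])

end

lemma scattering_coefficients_normalized:
  "Tl M z = 1 / Lim at_bot (nsnd z (psi M z))"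
  "Lc M z = Tl M z * Lim at_bot (nfst z (psi M z))"
  "Tr M z = 1 / Lim at_top (nfst z (phi M z))"
  "Rc M z = Tr M z * Lim at_top (nsnd z (phi M z))"
  "Tlbar M z = 1 / Lim at_bot (nfst z (psibar M z))"
  "Lbar M z = Tlbar M z * Lim at_bot (nsnd z (psibar M z))"
  "Trbar M z = 1 / Lim at_top (nsnd z (phibar M z))"
  "Rbar M z = Trbar M z * Lim at_top (nfst z (phibar M z))"
  by (simp_all add: Tl_def Lc_def Tr_def Rc_def Tlbar_def Lbar_def Trbar_def Rbar_def
      nfst_def[abs_def] nsnd_def[abs_def])

definition determined_by_limits :: "sys \<Rightarrow> complex \<Rightarrow> int filter \<Rightarrow> bool" where
  "determined_by_limits M z F \<longleftrightarrow> (\<forall>X. solves M z X \<longrightarrow> (nfst z X \<longlongrightarrow> 0) F \<longrightarrow> (nsnd z X \<longlongrightarrow> 0) F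
     \<longrightarrow> X = (\<lambda>_. (0, 0)))"

definition normalized_limits_exist :: "sys \<Rightarrow> complex \<Rightarrow> int filter \<Rightarrow> bool" where
  "normalized_limits_exist M z F \<longleftrightarrow>
     (\<forall>X. solves M z X \<longrightarrow> (\<exists>a. (nfst z X \<longlongrightarrow> a) F) \<and> (\<exists>b. (nsnd z X \<longlongrightarrow> b) F))"

lemma determined_by_limitsD:
  assumes "determined_by_limits M z F" and "solves M z X" and "solves M z Y"
    and "(nfst z X \<longlongrightarrow> a) F" "(nsnd z X \<longlongrightarrow> b) F" "(nfst z Y \<longlongrightarrow> a) F" "(nsnd z Y \<longlongrightarrow> b) F"
  shows "X = Y"
proof -
  have "solves M z (lin_comb 1 (-1) X Y)"
    using assms(2,3) by (rule solves_lin_comb)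
  moreover have "(nfst z (lin_comb 1 (-1) X Y) \<longlongrightarrow> 0) F" "(nsnd z (lin_comb 1 (-1) X Y) \<longlongrightarrow> 0) F"
    using tendsto_lin_comb[OF assms(4-7), of 1 "-1"] by simp_all
  ultimately have "lin_comb 1 (-1) X Y = (\<lambda>_. (0, 0))"
    using assms(1) by (simp add: determined_by_limits_def)
  then show ?thesis
    by (simp add: fun_eq_iff lin_comb_def prod_eq_iff)
qed

context
  fixes z :: complex
  assumes norm_z: "norm z = 1"
begin

lemma psi_eqI: "determined_by_limits M z at_top \<Longrightarrow> is_psi M z X \<Longrightarrow> psi M z = X"
  unfolding psi_def by (rule the_equality) (auto simp: is_psi_iff[OF norm_z] intro: determined_by_limitsD)

lemma phi_eqI: "determined_by_limits M z at_bot \<Longrightarrow> is_phi M z X \<Longrightarrow> phi M z = X"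
  unfolding phi_def by (rule the_equality) (auto simp: is_phi_iff[OF norm_z] intro: determined_by_limitsD)

lemma psibar_eqI: "determined_by_limits M z at_top \<Longrightarrow> is_psibar M z X \<Longrightarrow> psibar M z = X"
  unfolding psibar_def
  by (rule the_equality) (auto simp: is_psibar_iff[OF norm_z] intro: determined_by_limitsD)

lemma phibar_eqI: "determined_by_limits M z at_bot \<Longrightarrow> is_phibar M z X \<Longrightarrow> phibar M z = X"
  unfolding phibar_def
  by (rule the_equality) (auto simp: is_phibar_iff[OF norm_z] intro: determined_by_limitsD)

end

lemma linear_2x2_solvable:
  fixes x1 x2 y1 y2 :: "'a::field"
  assumes inj: "\<And>a b. a * x1 + b * x2 = 0 \<Longrightarrow> a * y1 + b * y2 = 0 \<Longrightarrow> a = 0 \<and> b = 0"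
  shows "\<exists>a b. a * x1 + b * x2 = c1 \<and> a * y1 + b * y2 = c2"
proof -
  define d where "d = x1 * y2 - x2 * y1"
  have "d \<noteq> 0"
  proof
    assume "d = 0"
    have "y2 = 0 \<and> - y1 = 0"
      by (rule inj) (use \<open>d = 0\<close> in \<open>simp_all add: d_def algebra_simps\<close>)
    moreover have "x2 = 0 \<and> - x1 = 0"
      by (rule inj) (use \<open>d = 0\<close> in \<open>simp_all add: d_def algebra_simps\<close>)
    ultimately show False
      using inj[of 1 0] by simp
  qed
  define a where "a = (c1 * y2 - x2 * c2) / d"
  define b where "b = (x1 * c2 - c1 * y1) / d"
  have "(c1 * y2 - x2 * c2) * x1 + (x1 * c2 - c1 * y1) * x2 = c1 * d"
    and "(c1 * y2 - x2 * c2) * y1 + (x1 * c2 - c1 * y1) * y2 = c2 * d"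
    by (simp_all add: d_def algebra_simps)
  then have "a * x1 + b * x2 = c1" and "a * y1 + b * y2 = c2"
    using \<open>d \<noteq> 0\<close> by (simp_all add: a_def b_def add_divide_distrib[symmetric])
  then show ?thesis by blast
qed

lemma exists_solution_with_limits:
  assumes "normalized_limits_exist M z F" and "determined_by_limits M z F" and "F \<noteq> bot"
    and initial: "\<And>c. \<exists>X. solves M z X \<and> X 0 = c"
  shows "\<exists>X. solves M z X \<and> (nfst z X \<longlongrightarrow> c1) F \<and> (nsnd z X \<longlongrightarrow> c2) F"
proof -
  obtain X1 X2 where X: "solves M z X1" "X1 0 = (1, 0)" "solves M z X2" "X2 0 = (0, 1)"
    using initial by metis
  obtain x1 y1 x2 y2 where lim: "(nfst z X1 \<longlongrightarrow> x1) F" "(nsnd z X1 \<longlongrightarrow> y1) F"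
    "(nfst z X2 \<longlongrightarrow> x2) F" "(nsnd z X2 \<longlongrightarrow> y2) F"
    using assms(1) X unfolding normalized_limits_exist_def by metis
  have "a = 0 \<and> b = 0" if "a * x1 + b * x2 = 0" "a * y1 + b * y2 = 0" for a b
  proof -
    have "lin_comb a b X1 X2 = (\<lambda>_. (0, 0))"
      using assms(2) solves_lin_comb[OF X(1,3)] tendsto_lin_comb[OF lim, of a b] that
      by (simp add: determined_by_limits_def)
    then have "lin_comb a b X1 X2 0 = (0, 0)"
      by simp
    then show ?thesis
      using X(2,4) by (simp add: lin_comb_def)
  qed
  then obtain a b where "a * x1 + b * x2 = c1" "a * y1 + b * y2 = c2"
    using linear_2x2_solvable by blast
  then show ?thesis
    using solves_lin_comb[OF X(1,3)] tendsto_lin_comb[OF lim, of a b] by auto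
qed

definition has_jost_solutions :: "sys \<Rightarrow> complex \<Rightarrow> bool" where
  "has_jost_solutions M z \<longleftrightarrow> is_psi M z (psi M z) \<and> is_phi M z (phi M z)
     \<and> is_psibar M z (psibar M z) \<and> is_phibar M z (phibar M z)"

lemma has_jost_solutionsI:
  assumes norm_z: "norm z = 1" and initial: "\<And>c. \<exists>X. solves M z X \<and> X 0 = c"
    and "normalized_limits_exist M z at_top" "determined_by_limits M z at_top"
    and "normalized_limits_exist M z at_bot" "determined_by_limits M z at_bot"
  shows "has_jost_solutions M z"
proof -
  have top: "\<exists>X. solves M z X \<and> (nfst z X \<longlongrightarrow> c1) at_top \<and> (nsnd z X \<longlongrightarrow> c2) at_top" for c1 c2
    using assms by (intro exists_solution_with_limits) simp_all
  have bot: "\<exists>X. solves M z X \<and> (nfst z X \<longlongrightarrow> c1) at_bot \<and> (nsnd z X \<longlongrightarrow> c2) at_bot" for c1 c2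
    using assms by (intro exists_solution_with_limits) simp_all
  obtain X1 where "solves M z X1" "(nfst z X1 \<longlongrightarrow> 0) at_top" "(nsnd z X1 \<longlongrightarrow> 1) at_top"
    using top by blast
  then have "is_psi M z (psi M z)"
    using psi_eqI[OF norm_z assms(4)] is_psi_iff[OF norm_z] by metis
  moreover obtain X2 where "solves M z X2" "(nfst z X2 \<longlongrightarrow> 1) at_bot" "(nsnd z X2 \<longlongrightarrow> 0) at_bot"
    using bot by blast
  then have "is_phi M z (phi M z)"
    using phi_eqI[OF norm_z assms(6)] is_phi_iff[OF norm_z] by metis
  moreover obtain X3 where "solves M z X3" "(nfst z X3 \<longlongrightarrow> 1) at_top" "(nsnd z X3 \<longlongrightarrow> 0) at_top"
    using top by blast
  then have "is_psibar M z (psibar M z)"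
    using psibar_eqI[OF norm_z assms(4)] is_psibar_iff[OF norm_z] by metis
  moreover obtain X4 where "solves M z X4" "(nfst z X4 \<longlongrightarrow> 0) at_bot" "(nsnd z X4 \<longlongrightarrow> 1) at_bot"
    using bot by blast
  then have "is_phibar M z (phibar M z)"
    using phibar_eqI[OF norm_z assms(6)] is_phibar_iff[OF norm_z] by metis
  ultimately show ?thesis
    by (simp add: has_jost_solutions_def)
qed

lemma unimodular_wronskian_step:
  assumes "unimodular M z" and "solves M z X" and "solves M z Y"
  shows "fst (X n) * snd (Y n) - snd (X n) * fst (Y n)
    = fst (X (n + 1)) * snd (Y (n + 1)) - snd (X (n + 1)) * fst (Y (n + 1))"
proof -
  obtain a b c d where M: "M n z = (a, b, c, d)"
    using prod_cases4 by blast
  then have det: "a * d - b * c = 1"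
    using assms(1) by (auto simp: unimodular_def dest: spec[of _ n])
  have "X n = sys_step M z n (X (n + 1))" and "Y n = sys_step M z n (Y (n + 1))"
    using assms(2,3) unfolding solves_iff_sys_step by blast+
  moreover have "(a * x1 + b * x2) * (c * y1 + d * y2) - (c * x1 + d * x2) * (a * y1 + b * y2)
      = (a * d - b * c) * (x1 * y2 - x2 * y1)" for x1 x2 y1 y2 :: complex
    by algebra
  ultimately show ?thesis
    by (simp add: sys_step_def M det)
qed

lemma wronskian_limits_eq:
  assumes "z \<noteq> 0" and "unimodular M z" and X: "solves M z X" and Y: "solves M z Y"
    and "(nfst z X \<longlongrightarrow> a1) at_top" "(nsnd z X \<longlongrightarrow> b1) at_top"
    and "(nfst z Y \<longlongrightarrow> a2) at_top" "(nsnd z Y \<longlongrightarrow> b2) at_top"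
    and "(nfst z X \<longlongrightarrow> a3) at_bot" "(nsnd z X \<longlongrightarrow> b3) at_bot"
    and "(nfst z Y \<longlongrightarrow> a4) at_bot" "(nsnd z Y \<longlongrightarrow> b4) at_bot"
  shows "a1 * b2 - b1 * a2 = a3 * b4 - b3 * a4"
proof -
  define W where "W n = nfst z X n * nsnd z Y n - nsnd z X n * nfst z Y n" for n
  have W_eq: "W n = fst (X n) * snd (Y n) - snd (X n) * fst (Y n)" for n
  proof -
    have "z powi n * z powi (- n) = 1"
      using \<open>z \<noteq> 0\<close> by (simp add: power_int_minus)
    moreover have "W n = (fst (X n) * snd (Y n) - snd (X n) * fst (Y n)) * (z powi n * z powi (- n))"
      by (simp add: W_def nfst_def nsnd_def algebra_simps)
    ultimately show ?thesis by simp
  qed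
  have step: "W (n + 1) = W n" for n
    unfolding W_eq by (rule unimodular_wronskian_step[OF assms(2) X Y, symmetric])
  have "W n = W 0" for n
  proof (induction n rule: int_induct[where k = 0])
    case (step1 i)
    then show ?case by (metis step)
  next
    case (step2 i)
    then show ?case by (metis step diff_add_cancel)
  qed simp
  then obtain c where const: "W = (\<lambda>_. c)"
    by blast
  have "(W \<longlongrightarrow> a1 * b2 - b1 * a2) at_top" and "(W \<longlongrightarrow> a3 * b4 - b3 * a4) at_bot"
    unfolding W_def[abs_def] by (intro tendsto_intros assms)+
  then have "a1 * b2 - b1 * a2 = c" and "a3 * b4 - b3 * a4 = c"
    unfolding const by (simp_all add: tendsto_const_iff)
  then show ?thesis by simp
qed

context
  fixes M :: sys and z :: complex
  assumes norm_z: "norm z = 1" and unimodular: "unimodular M z" and jost: "has_jost_solutions M z"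
    and lim_top: "normalized_limits_exist M z at_top" and lim_bot: "normalized_limits_exist M z at_bot"
begin

lemma unimodular_Tr_eq_Tl: "Tr M z = Tl M z"
proof -
  have psi: "solves M z (psi M z)" "(nfst z (psi M z) \<longlongrightarrow> 0) at_top" "(nsnd z (psi M z) \<longlongrightarrow> 1) at_top"
    and phi: "solves M z (phi M z)" "(nfst z (phi M z) \<longlongrightarrow> 1) at_bot" "(nsnd z (phi M z) \<longlongrightarrow> 0) at_bot"
    using jost by (simp_all add: has_jost_solutions_def is_psi_iff is_phi_iff norm_z)
  obtain pa pb where psi_bot: "(nfst z (psi M z) \<longlongrightarrow> pa) at_bot" "(nsnd z (psi M z) \<longlongrightarrow> pb) at_bot"
    using lim_bot psi(1) unfolding normalized_limits_exist_def by blast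
  obtain fa fb where phi_top: "(nfst z (phi M z) \<longlongrightarrow> fa) at_top" "(nsnd z (phi M z) \<longlongrightarrow> fb) at_top"
    using lim_top phi(1) unfolding normalized_limits_exist_def by blast
  have "fa * 1 - fb * 0 = 1 * pb - 0 * pa"
    using norm_z
    by (intro wronskian_limits_eq[OF _ unimodular phi(1) psi(1) phi_top psi(2,3) phi(2,3) psi_bot]) auto
  moreover have "Tr M z = 1 / fa" and "Tl M z = 1 / pb"
    using Lim_at_top_eqI[OF phi_top(1)] Lim_at_bot_eqI[OF psi_bot(2)]
    by (simp_all add: scattering_coefficients_normalized)
  ultimately show ?thesis
    by simp
qed

lemma unimodular_Trbar_eq_Tlbar: "Trbar M z = Tlbar M z"
proof -
  have psibar: "solves M z (psibar M z)" "(nfst z (psibar M z) \<longlongrightarrow> 1) at_top"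
      "(nsnd z (psibar M z) \<longlongrightarrow> 0) at_top"
    and phibar: "solves M z (phibar M z)" "(nfst z (phibar M z) \<longlongrightarrow> 0) at_bot"
      "(nsnd z (phibar M z) \<longlongrightarrow> 1) at_bot"
    using jost by (simp_all add: has_jost_solutions_def is_psibar_iff is_phibar_iff norm_z)
  obtain ba bb where psibar_bot: "(nfst z (psibar M z) \<longlongrightarrow> ba) at_bot"
      "(nsnd z (psibar M z) \<longlongrightarrow> bb) at_bot"
    using lim_bot psibar(1) unfolding normalized_limits_exist_def by blast
  obtain ga gb where phibar_top: "(nfst z (phibar M z) \<longlongrightarrow> ga) at_top"
      "(nsnd z (phibar M z) \<longlongrightarrow> gb) at_top"
    using lim_top phibar(1) unfolding normalized_limits_exist_def by blast
  have "1 * gb - 0 * ga = ba * 1 - bb * 0"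
    using norm_z
    by (intro wronskian_limits_eq[OF _ unimodular psibar(1) phibar(1) psibar(2,3) phibar_top
          psibar_bot phibar(2,3)]) auto
  moreover have "Trbar M z = 1 / gb" and "Tlbar M z = 1 / ba"
    using Lim_at_top_eqI[OF phibar_top(2)] Lim_at_bot_eqI[OF psibar_bot(1)]
    by (simp_all add: scattering_coefficients_normalized)
  ultimately show ?thesis
    by simp
qed

end

section \<open>The system (Q)\<close>

lemma sysQ_unimodular: "z \<noteq> 0 \<Longrightarrow> unimodular (sysQ q r) z"
  by (simp add: unimodular_def sysQ_def field_simps)

lemma solves_sysQ_iff:
  "solves (sysQ q r) z X \<longleftrightarrow> (\<forall>n.
     fst (X n) = z * fst (X (n + 1)) + (z - inverse z) * q n * snd (X (n + 1)) \<and>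
     snd (X n) = z * r n * fst (X (n + 1)) + (inverse z + (z - inverse z) * q n * r n) * snd (X (n + 1)))"
  by (simp add: solves_def sysQ_def)

text \<open>Bounds the entries of the (Q) matrix minus \<open>diag(z, 1/z)\<close>, using \<open>\<bar>z - 1/z\<bar> \<le> 2\<close>.\<close>

definition sysQ_weight :: "(int \<Rightarrow> complex) \<Rightarrow> (int \<Rightarrow> complex) \<Rightarrow> int \<Rightarrow> real" where
  "sysQ_weight q r n = 2 * norm (q n) + norm (r n) + 2 * norm (q n) * norm (r n)"

definition sol_norm :: "(int \<Rightarrow> complex \<times> complex) \<Rightarrow> int \<Rightarrow> real" where
  "sol_norm X n = norm (fst (X n)) + norm (snd (X n))"

lemma sol_norm_nonneg: "0 \<le> sol_norm X n"
  unfolding sol_norm_def by simp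

lemma norm_matrix_mult_le:
  fixes a b c d x y :: "'a::real_normed_div_algebra"
  assumes "norm a + norm c \<le> K" and "norm b + norm d \<le> K"
  shows "norm (a * x + b * y) + norm (c * x + d * y) \<le> K * (norm x + norm y)"
proof -
  have "norm (a * x + b * y) + norm (c * x + d * y)
      \<le> (norm a + norm c) * norm x + (norm b + norm d) * norm y"
    using norm_triangle_ineq[of "a * x" "b * y"] norm_triangle_ineq[of "c * x" "d * y"]
    by (simp add: norm_mult algebra_simps)
  also have "\<dots> \<le> K * norm x + K * norm y"
    using assms by (intro add_mono mult_right_mono) simp_all
  finally show ?thesis
    by (simp add: algebra_simps)
qed

context
  fixes q r :: "int \<Rightarrow> complex" and z :: complex and X :: "int \<Rightarrow> complex \<times> complex"
  assumes norm_z: "norm z = 1" and sol: "solves (sysQ q r) z X"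
begin

private lemma z_nonzero: "z \<noteq> 0"
  using norm_z by auto

private lemma norm_z_minus_inverse: "norm (z - inverse z) \<le> 2"
  using norm_triangle_ineq4[of z "inverse z"] norm_z by (simp add: norm_inverse)

private lemma norm_diagonal_le: "norm (inverse z + (z - inverse z) * q n * r n) \<le> 1 + 2 * norm (q n) * norm (r n)"
proof -
  have "norm ((z - inverse z) * q n * r n) \<le> 2 * norm (q n) * norm (r n)"
    using norm_z_minus_inverse by (simp add: norm_mult mult_right_mono)
  then show ?thesis
    using norm_triangle_ineq[of "inverse z" "(z - inverse z) * q n * r n"] norm_z
    by (simp add: norm_inverse)
qed

private lemma powi_succ:
  "z powi (n + 1) = z powi n * z" "z powi (- (n + 1)) = z powi (- n) * inverse z"
  using z_nonzero by (simp_all add: power_int_add power_int_diff power_int_minus divide_inverse)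

private lemma sysQ_backward:
  "fst (X n) = z * fst (X (n + 1)) + (z - inverse z) * q n * snd (X (n + 1))"
  "snd (X n) = z * r n * fst (X (n + 1)) + (inverse z + (z - inverse z) * q n * r n) * snd (X (n + 1))"
  using sol unfolding solves_sysQ_iff by blast+

private lemma sysQ_forward:
  "fst (X (n + 1)) = (inverse z + (z - inverse z) * q n * r n) * fst (X n) + (- (z - inverse z) * q n) * snd (X n)"
  "snd (X (n + 1)) = (- z * r n) * fst (X n) + z * snd (X n)"
  unfolding sysQ_backward[of n] using z_nonzero by (simp_all add: field_simps)

lemma sysQ_sol_norm_backward: "sol_norm X n \<le> (1 + sysQ_weight q r n) * sol_norm X (n + 1)"
  unfolding sol_norm_def sysQ_backward[of n]
proof (rule norm_matrix_mult_le)
  show "norm z + norm (z * r n) \<le> 1 + sysQ_weight q r n"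
    using norm_z by (simp add: sysQ_weight_def norm_mult)
  have "norm ((z - inverse z) * q n) \<le> 2 * norm (q n)"
    using norm_z_minus_inverse by (simp add: norm_mult mult_right_mono)
  then show "norm ((z - inverse z) * q n) + norm (inverse z + (z - inverse z) * q n * r n)
      \<le> 1 + sysQ_weight q r n"
    using norm_diagonal_le[of n] norm_ge_zero[of "r n"] unfolding sysQ_weight_def by linarith
qed

lemma sysQ_sol_norm_forward: "sol_norm X (n + 1) \<le> (1 + sysQ_weight q r n) * sol_norm X n"
  unfolding sol_norm_def sysQ_forward[of n]
proof (rule norm_matrix_mult_le)
  show "norm (inverse z + (z - inverse z) * q n * r n) + norm (- z * r n) \<le> 1 + sysQ_weight q r n"
  proof -
    have "norm (- z * r n) = norm (r n)"
      using norm_z by (simp add: norm_mult)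
    then show ?thesis
      using norm_diagonal_le[of n] norm_ge_zero[of "q n"] unfolding sysQ_weight_def by linarith
  qed
  have "norm ((z - inverse z) * q n) \<le> 2 * norm (q n)"
    using norm_z_minus_inverse by (simp add: norm_mult mult_right_mono)
  moreover have "norm (- (z - inverse z) * q n) = norm ((z - inverse z) * q n)"
    by (simp only: mult_minus_left norm_minus_cancel)
  ultimately show "norm (- (z - inverse z) * q n) + norm z \<le> 1 + sysQ_weight q r n"
    using norm_z norm_ge_zero[of "r n"] mult_nonneg_nonneg[OF norm_ge_zero[of "q n"] norm_ge_zero[of "r n"]]
    unfolding sysQ_weight_def by linarith
qed

lemma sysQ_nfst_increment: "norm (nfst z X n - nfst z X (n + 1)) \<le> sysQ_weight q r n * sol_norm X (n + 1)"
proof -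
  have "nfst z X n - nfst z X (n + 1) = z powi n * ((z - inverse z) * q n * snd (X (n + 1)))"
    by (simp only: nfst_def powi_succ sysQ_backward(1)[of n]) (simp add: algebra_simps)
  then have "norm (nfst z X n - nfst z X (n + 1)) = norm (z - inverse z) * norm (q n) * norm (snd (X (n + 1)))"
    using norm_z by (simp add: norm_mult norm_power_int)
  also have "\<dots> \<le> 2 * norm (q n) * norm (snd (X (n + 1)))"
    using norm_z_minus_inverse by (intro mult_right_mono) auto
  also have "\<dots> \<le> sysQ_weight q r n * sol_norm X (n + 1)"
    by (intro mult_mono) (auto simp: sysQ_weight_def sol_norm_def)
  finally show ?thesis .
qed

lemma sysQ_nsnd_increment: "norm (nsnd z X n - nsnd z X (n + 1)) \<le> sysQ_weight q r n * sol_norm X (n + 1)"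
proof -
  have "nsnd z X n - nsnd z X (n + 1)
      = z powi (- n) * (z * r n * fst (X (n + 1)) + (z - inverse z) * q n * r n * snd (X (n + 1)))"
    using z_nonzero by (simp only: nsnd_def powi_succ sysQ_backward(2)[of n]) (simp add: field_simps)
  then have "norm (nsnd z X n - nsnd z X (n + 1))
      \<le> norm (r n) * norm (fst (X (n + 1))) + norm (z - inverse z) * (norm (q n) * norm (r n)) * norm (snd (X (n + 1)))"
    using norm_z norm_triangle_ineq[of "z * r n * fst (X (n + 1))" "(z - inverse z) * q n * r n * snd (X (n + 1))"]
    by (simp add: norm_mult norm_power_int mult.assoc)
  also have "\<dots> \<le> sysQ_weight q r n * norm (fst (X (n + 1))) + sysQ_weight q r n * norm (snd (X (n + 1)))"
  proof (intro add_mono mult_right_mono)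
    have "norm (z - inverse z) * (norm (q n) * norm (r n)) \<le> 2 * (norm (q n) * norm (r n))"
      using norm_z_minus_inverse by (rule mult_right_mono) simp
    then show "norm (z - inverse z) * (norm (q n) * norm (r n)) \<le> sysQ_weight q r n"
      using norm_ge_zero[of "q n"] norm_ge_zero[of "r n"] unfolding sysQ_weight_def by linarith
  qed (auto simp: sysQ_weight_def)
  finally show ?thesis
    by (simp add: sol_norm_def algebra_simps)
qed

end

lemma nonneg_summable_sysQ_weight:
  assumes "rapid_decay q" and "rapid_decay r"
  shows "nonneg_summable_int (sysQ_weight q r)"
proof -
  have q: "nonneg_summable_int (\<lambda>n. norm (q n))" and r: "nonneg_summable_int (\<lambda>n. norm (r n))"
    using assms by (simp_all add: nonneg_summable_int_rapid_decay)
  have "((\<lambda>n. norm (r n)) \<longlongrightarrow> 0) at_top" and "((\<lambda>n. norm (r n)) \<longlongrightarrow> 0) at_bot"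
    using tendsto_zero_of_rapid_decay[OF assms(2)] by (simp_all add: tendsto_norm_zero)
  then have "nonneg_summable_int (\<lambda>n. 2 * norm (q n) + norm (r n) + 2 * (norm (q n) * norm (r n)))"
    by (intro nonneg_summable_int_add nonneg_summable_int_cmult nonneg_summable_int_mult_tendsto_zero q r)
      simp_all
  then show ?thesis
    by (simp add: sysQ_weight_def[abs_def] mult.assoc)
qed

context
  fixes q r :: "int \<Rightarrow> complex" and z :: complex
  assumes norm_z: "norm z = 1" and weight: "nonneg_summable_int (sysQ_weight q r)"
begin

lemma sysQ_sol_norm_comparable:
  obtains C where "\<And>X n m. solves (sysQ q r) z X \<Longrightarrow> sol_norm X n \<le> C * sol_norm X m"
proof -
  obtain S where S: "\<And>m n. sum (sysQ_weight q r) {m..<n} \<le> S"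
    using nonneg_summable_int_interval_sums_bounded[OF weight] by blast
  have "sol_norm X n \<le> exp S * sol_norm X m" if "solves (sysQ q r) z X" for X n m
    by (rule gronwall_two_sided[OF sysQ_sol_norm_backward[OF norm_z that]
          sysQ_sol_norm_forward[OF norm_z that] sol_norm_nonneg nonneg_summable_int_nonneg[OF weight] S])
  then show ?thesis
    by (rule that)
qed

lemma sysQ_normalized_limits_exist:
  "normalized_limits_exist (sysQ q r) z at_top" "normalized_limits_exist (sysQ q r) z at_bot"
proof -
  obtain C where C: "\<And>X n m. solves (sysQ q r) z X \<Longrightarrow> sol_norm X n \<le> C * sol_norm X m"
    using sysQ_sol_norm_comparable by blast
  have "(\<exists>a. (nfst z X \<longlongrightarrow> a) F) \<and> (\<exists>b. (nsnd z X \<longlongrightarrow> b) F)"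
    if X: "solves (sysQ q r) z X" and F: "F = at_top \<or> F = at_bot" for X F
  proof -
    have bound: "sysQ_weight q r n * sol_norm X (n + 1) \<le> C * sol_norm X 0 * sysQ_weight q r n" for n
      using mult_left_mono[OF C[OF X, of "n + 1" 0] nonneg_summable_int_nonneg[OF weight, of n]]
      by (simp add: mult_ac)
    have "norm (nfst z X n - nfst z X (n + 1)) \<le> C * sol_norm X 0 * sysQ_weight q r n"
      and "norm (nsnd z X n - nsnd z X (n + 1)) \<le> C * sol_norm X 0 * sysQ_weight q r n" for n
      using sysQ_nfst_increment[OF norm_z X, of n] sysQ_nsnd_increment[OF norm_z X, of n] bound[of n]
      by simp_all
    then show ?thesis
      using F convergent_at_top_at_bot_of_increments[OF weight] by blast
  qed
  then show "normalized_limits_exist (sysQ q r) z at_top" "normalized_limits_exist (sysQ q r) z at_bot"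
    unfolding normalized_limits_exist_def by blast+
qed

lemma sysQ_determined_by_limits:
  assumes "F \<noteq> bot"
  shows "determined_by_limits (sysQ q r) z F"
  unfolding determined_by_limits_def
proof (intro allI impI)
  fix X
  assume X: "solves (sysQ q r) z X" and lim: "(nfst z X \<longlongrightarrow> 0) F" "(nsnd z X \<longlongrightarrow> 0) F"
  obtain C where C: "\<And>n m. sol_norm X n \<le> C * sol_norm X m"
    using sysQ_sol_norm_comparable X by metis
  have "sol_norm X = (\<lambda>n. norm (nfst z X n) + norm (nsnd z X n))"
    using norm_z by (simp add: fun_eq_iff sol_norm_def nfst_def nsnd_def norm_mult norm_power_int)
  then have "(sol_norm X \<longlongrightarrow> 0) F"
    using tendsto_add[OF tendsto_norm_zero[OF lim(1)] tendsto_norm_zero[OF lim(2)]] by simp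
  then have le: "sol_norm X n \<le> C * 0" for n
    by (rule tendsto_le[OF assms tendsto_mult_left tendsto_const]) (intro always_eventually allI C)
  have "norm (fst (X n)) = 0 \<and> norm (snd (X n)) = 0" for n
    using le[of n] norm_ge_zero[of "fst (X n)"] norm_ge_zero[of "snd (X n)"] unfolding sol_norm_def
    by linarith
  then show "X = (\<lambda>_. (0, 0))"
    by (simp add: fun_eq_iff prod_eq_iff)
qed

lemma sysQ_has_jost_solutions: "has_jost_solutions (sysQ q r) z"
  using norm_z sysQ_normalized_limits_exist
  by (intro has_jost_solutionsI unimodular_exists_solution sysQ_unimodular sysQ_determined_by_limits) auto

end

section \<open>Transfer of scattering data along a gauge transformation\<close>

locale scattering_gauge =
  fixes M N :: sys and z :: complex
    and G :: "(int \<Rightarrow> complex \<times> complex) \<Rightarrow> int \<Rightarrow> complex \<times> complex"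
    and \<alpha>\<^sub>r \<beta>\<^sub>r \<alpha>\<^sub>l \<beta>\<^sub>l :: complex
  assumes norm_z: "norm z = 1"
    and jost: "has_jost_solutions M z"
    and limits_exist: "normalized_limits_exist M z at_top" "normalized_limits_exist M z at_bot"
    and determined: "determined_by_limits M z at_top" "determined_by_limits M z at_bot"
    and solves_G: "\<And>X. solves M z X \<Longrightarrow> solves N z (G X)"
    and onto_G: "\<And>Y. solves N z Y \<Longrightarrow> \<exists>X. solves M z X \<and> Y = G X"
    and G_zero: "G (\<lambda>_. (0, 0)) = (\<lambda>_. (0, 0))"
    and limits_G_top: "\<And>X a b. solves M z X \<Longrightarrow> (nfst z X \<longlongrightarrow> a) at_top \<Longrightarrow> (nsnd z X \<longlongrightarrow> b) at_top
      \<Longrightarrow> (nfst z (G X) \<longlongrightarrow> \<alpha>\<^sub>r * a) at_top \<and> (nsnd z (G X) \<longlongrightarrow> \<beta>\<^sub>r * b) at_top"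
    and limits_G_bot: "\<And>X a b. solves M z X \<Longrightarrow> (nfst z X \<longlongrightarrow> a) at_bot \<Longrightarrow> (nsnd z X \<longlongrightarrow> b) at_bot
      \<Longrightarrow> (nfst z (G X) \<longlongrightarrow> \<alpha>\<^sub>l * a) at_bot \<and> (nsnd z (G X) \<longlongrightarrow> \<beta>\<^sub>l * b) at_bot"
    and nonzero: "\<alpha>\<^sub>r \<noteq> 0" "\<beta>\<^sub>r \<noteq> 0" "\<alpha>\<^sub>l \<noteq> 0" "\<beta>\<^sub>l \<noteq> 0"
begin

lemma determined_target: "determined_by_limits N z at_top" "determined_by_limits N z at_bot"
proof -
  have determined_at: "determined_by_limits N z F"
    if F: "F \<noteq> bot" and det: "determined_by_limits M z F" and ex: "normalized_limits_exist M z F"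
      and "\<alpha> \<noteq> 0" and "\<beta> \<noteq> 0"
      and lim: "\<And>X a b. solves M z X \<Longrightarrow> (nfst z X \<longlongrightarrow> a) F \<Longrightarrow> (nsnd z X \<longlongrightarrow> b) F
        \<Longrightarrow> (nfst z (G X) \<longlongrightarrow> \<alpha> * a) F \<and> (nsnd z (G X) \<longlongrightarrow> \<beta> * b) F"
    for F \<alpha> \<beta>
    unfolding determined_by_limits_def
  proof (intro allI impI)
    fix Y
    assume "solves N z Y" and Y0: "(nfst z Y \<longlongrightarrow> 0) F" "(nsnd z Y \<longlongrightarrow> 0) F"
    then obtain X where X: "solves M z X" and Y: "Y = G X"
      using onto_G by blast
    obtain a b where ab: "(nfst z X \<longlongrightarrow> a) F" "(nsnd z X \<longlongrightarrow> b) F"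
      using ex X unfolding normalized_limits_exist_def by blast
    have "\<alpha> * a = 0" and "\<beta> * b = 0"
      using lim[OF X ab] Y0 tendsto_unique[OF F] unfolding Y by blast+
    then have "X = (\<lambda>_. (0, 0))"
      using det \<open>\<alpha> \<noteq> 0\<close> \<open>\<beta> \<noteq> 0\<close> X ab unfolding determined_by_limits_def by simp
    then show "Y = (\<lambda>_. (0, 0))"
      by (simp add: Y G_zero)
  qed
  show "determined_by_limits N z at_top"
    by (rule determined_at[OF trivial_limit_at_top_linorder determined(1) limits_exist(1) nonzero(1,2)
          limits_G_top])
  show "determined_by_limits N z at_bot"
    by (rule determined_at[OF trivial_limit_at_bot_linorder determined(2) limits_exist(2) nonzero(3,4)
          limits_G_bot])
qed

definition rescaled :: "complex \<Rightarrow> (int \<Rightarrow> complex \<times> complex) \<Rightarrow> int \<Rightarrow> complex \<times> complex" where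
  "rescaled c X = lin_comb c 0 (G X) (G X)"

lemma solves_rescaled: "solves M z X \<Longrightarrow> solves N z (rescaled c X)"
  by (simp add: rescaled_def solves_lin_comb solves_G)

lemma rescaled_limits:
  assumes X: "solves M z X"
  shows "(nfst z X \<longlongrightarrow> a) at_top \<Longrightarrow> (nsnd z X \<longlongrightarrow> b) at_top
      \<Longrightarrow> (nfst z (rescaled c X) \<longlongrightarrow> c * \<alpha>\<^sub>r * a) at_top \<and> (nsnd z (rescaled c X) \<longlongrightarrow> c * \<beta>\<^sub>r * b) at_top"
    and "(nfst z X \<longlongrightarrow> a) at_bot \<Longrightarrow> (nsnd z X \<longlongrightarrow> b) at_bot
      \<Longrightarrow> (nfst z (rescaled c X) \<longlongrightarrow> c * \<alpha>\<^sub>l * a) at_bot \<and> (nsnd z (rescaled c X) \<longlongrightarrow> c * \<beta>\<^sub>l * b) at_bot"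
proof -
  show "(nfst z (rescaled c X) \<longlongrightarrow> c * \<alpha>\<^sub>r * a) at_top \<and> (nsnd z (rescaled c X) \<longlongrightarrow> c * \<beta>\<^sub>r * b) at_top"
    if "(nfst z X \<longlongrightarrow> a) at_top" "(nsnd z X \<longlongrightarrow> b) at_top"
  proof -
    note GX = limits_G_top[OF X that]
    show ?thesis
      using tendsto_lin_comb[OF GX[THEN conjunct1] GX[THEN conjunct2] GX[THEN conjunct1]
          GX[THEN conjunct2], of c 0]
      by (simp add: rescaled_def mult.assoc)
  qed
  show "(nfst z (rescaled c X) \<longlongrightarrow> c * \<alpha>\<^sub>l * a) at_bot \<and> (nsnd z (rescaled c X) \<longlongrightarrow> c * \<beta>\<^sub>l * b) at_bot"
    if "(nfst z X \<longlongrightarrow> a) at_bot" "(nsnd z X \<longlongrightarrow> b) at_bot"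
  proof -
    note GX = limits_G_bot[OF X that]
    show ?thesis
      using tendsto_lin_comb[OF GX[THEN conjunct1] GX[THEN conjunct2] GX[THEN conjunct1]
          GX[THEN conjunct2], of c 0]
      by (simp add: rescaled_def mult.assoc)
  qed
qed

lemma Tl_Lc_transfer: "Tl N z = \<beta>\<^sub>r / \<beta>\<^sub>l * Tl M z" "Lc N z = \<alpha>\<^sub>l / \<beta>\<^sub>l * Lc M z"
proof -
  let ?X = "psi M z"
  have X: "solves M z ?X" "(nfst z ?X \<longlongrightarrow> 0) at_top" "(nsnd z ?X \<longlongrightarrow> 1) at_top"
    using jost by (simp_all add: has_jost_solutions_def is_psi_iff[OF norm_z])
  obtain a b where ab: "(nfst z ?X \<longlongrightarrow> a) at_bot" "(nsnd z ?X \<longlongrightarrow> b) at_bot"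
    using limits_exist(2) X(1) unfolding normalized_limits_exist_def by blast
  have "psi N z = rescaled (1 / \<beta>\<^sub>r) ?X"
    using rescaled_limits(1)[OF X, of "1 / \<beta>\<^sub>r"] solves_rescaled[OF X(1)] nonzero
    by (intro psi_eqI[OF norm_z determined_target(1)]) (simp add: is_psi_iff[OF norm_z])
  then have "Lim at_bot (nfst z (psi N z)) = \<alpha>\<^sub>l * a / \<beta>\<^sub>r" and "Lim at_bot (nsnd z (psi N z)) = \<beta>\<^sub>l * b / \<beta>\<^sub>r"
    using rescaled_limits(2)[OF X(1) ab, of "1 / \<beta>\<^sub>r"] by (simp_all add: Lim_at_bot_eqI)
  moreover have "Lim at_bot (nfst z ?X) = a" and "Lim at_bot (nsnd z ?X) = b"
    using ab by (simp_all add: Lim_at_bot_eqI)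
  ultimately show "Tl N z = \<beta>\<^sub>r / \<beta>\<^sub>l * Tl M z" "Lc N z = \<alpha>\<^sub>l / \<beta>\<^sub>l * Lc M z"
    using nonzero by (simp_all add: scattering_coefficients_normalized)
qed

lemma Tr_Rc_transfer: "Tr N z = \<alpha>\<^sub>l / \<alpha>\<^sub>r * Tr M z" "Rc N z = \<beta>\<^sub>r / \<alpha>\<^sub>r * Rc M z"
proof -
  let ?X = "phi M z"
  have X: "solves M z ?X" "(nfst z ?X \<longlongrightarrow> 1) at_bot" "(nsnd z ?X \<longlongrightarrow> 0) at_bot"
    using jost by (simp_all add: has_jost_solutions_def is_phi_iff[OF norm_z])
  obtain a b where ab: "(nfst z ?X \<longlongrightarrow> a) at_top" "(nsnd z ?X \<longlongrightarrow> b) at_top"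
    using limits_exist(1) X(1) unfolding normalized_limits_exist_def by blast
  have "phi N z = rescaled (1 / \<alpha>\<^sub>l) ?X"
    using rescaled_limits(2)[OF X, of "1 / \<alpha>\<^sub>l"] solves_rescaled[OF X(1)] nonzero
    by (intro phi_eqI[OF norm_z determined_target(2)]) (simp add: is_phi_iff[OF norm_z])
  then have "Lim at_top (nfst z (phi N z)) = \<alpha>\<^sub>r * a / \<alpha>\<^sub>l" and "Lim at_top (nsnd z (phi N z)) = \<beta>\<^sub>r * b / \<alpha>\<^sub>l"
    using rescaled_limits(1)[OF X(1) ab, of "1 / \<alpha>\<^sub>l"] by (simp_all add: Lim_at_top_eqI)
  moreover have "Lim at_top (nfst z ?X) = a" and "Lim at_top (nsnd z ?X) = b"
    using ab by (simp_all add: Lim_at_top_eqI)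
  ultimately show "Tr N z = \<alpha>\<^sub>l / \<alpha>\<^sub>r * Tr M z" "Rc N z = \<beta>\<^sub>r / \<alpha>\<^sub>r * Rc M z"
    using nonzero by (simp_all add: scattering_coefficients_normalized)
qed

lemma Tlbar_Lbar_transfer: "Tlbar N z = \<alpha>\<^sub>r / \<alpha>\<^sub>l * Tlbar M z" "Lbar N z = \<beta>\<^sub>l / \<alpha>\<^sub>l * Lbar M z"
proof -
  let ?X = "psibar M z"
  have X: "solves M z ?X" "(nfst z ?X \<longlongrightarrow> 1) at_top" "(nsnd z ?X \<longlongrightarrow> 0) at_top"
    using jost by (simp_all add: has_jost_solutions_def is_psibar_iff[OF norm_z])
  obtain a b where ab: "(nfst z ?X \<longlongrightarrow> a) at_bot" "(nsnd z ?X \<longlongrightarrow> b) at_bot"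
    using limits_exist(2) X(1) unfolding normalized_limits_exist_def by blast
  have "psibar N z = rescaled (1 / \<alpha>\<^sub>r) ?X"
    using rescaled_limits(1)[OF X, of "1 / \<alpha>\<^sub>r"] solves_rescaled[OF X(1)] nonzero
    by (intro psibar_eqI[OF norm_z determined_target(1)]) (simp add: is_psibar_iff[OF norm_z])
  then have "Lim at_bot (nfst z (psibar N z)) = \<alpha>\<^sub>l * a / \<alpha>\<^sub>r"
    and "Lim at_bot (nsnd z (psibar N z)) = \<beta>\<^sub>l * b / \<alpha>\<^sub>r"
    using rescaled_limits(2)[OF X(1) ab, of "1 / \<alpha>\<^sub>r"] by (simp_all add: Lim_at_bot_eqI)
  moreover have "Lim at_bot (nfst z ?X) = a" and "Lim at_bot (nsnd z ?X) = b"
    using ab by (simp_all add: Lim_at_bot_eqI)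
  ultimately show "Tlbar N z = \<alpha>\<^sub>r / \<alpha>\<^sub>l * Tlbar M z" "Lbar N z = \<beta>\<^sub>l / \<alpha>\<^sub>l * Lbar M z"
    using nonzero by (simp_all add: scattering_coefficients_normalized)
qed

lemma Trbar_Rbar_transfer: "Trbar N z = \<beta>\<^sub>l / \<beta>\<^sub>r * Trbar M z" "Rbar N z = \<alpha>\<^sub>r / \<beta>\<^sub>r * Rbar M z"
proof -
  let ?X = "phibar M z"
  have X: "solves M z ?X" "(nfst z ?X \<longlongrightarrow> 0) at_bot" "(nsnd z ?X \<longlongrightarrow> 1) at_bot"
    using jost by (simp_all add: has_jost_solutions_def is_phibar_iff[OF norm_z])
  obtain a b where ab: "(nfst z ?X \<longlongrightarrow> a) at_top" "(nsnd z ?X \<longlongrightarrow> b) at_top"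
    using limits_exist(1) X(1) unfolding normalized_limits_exist_def by blast
  have "phibar N z = rescaled (1 / \<beta>\<^sub>l) ?X"
    using rescaled_limits(2)[OF X, of "1 / \<beta>\<^sub>l"] solves_rescaled[OF X(1)] nonzero
    by (intro phibar_eqI[OF norm_z determined_target(2)]) (simp add: is_phibar_iff[OF norm_z])
  then have "Lim at_top (nfst z (phibar N z)) = \<alpha>\<^sub>r * a / \<beta>\<^sub>l"
    and "Lim at_top (nsnd z (phibar N z)) = \<beta>\<^sub>r * b / \<beta>\<^sub>l"
    using rescaled_limits(1)[OF X(1) ab, of "1 / \<beta>\<^sub>l"] by (simp_all add: Lim_at_top_eqI)
  moreover have "Lim at_top (nfst z ?X) = a" and "Lim at_top (nsnd z ?X) = b"
    using ab by (simp_all add: Lim_at_top_eqI)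
  ultimately show "Trbar N z = \<beta>\<^sub>l / \<beta>\<^sub>r * Trbar M z" "Rbar N z = \<alpha>\<^sub>r / \<beta>\<^sub>r * Rbar M z"
    using nonzero by (simp_all add: scattering_coefficients_normalized)
qed

end

context
  fixes M N :: sys and z :: complex and s :: int
    and g h :: "int \<Rightarrow> complex \<times> complex \<Rightarrow> complex \<times> complex"
  assumes intertwine: "\<And>n v. g n (sys_step M z (n + s) v) = sys_step N z n (g (n + 1) v)"
    and left_inverse: "\<And>n v. h n (g n v) = v" and right_inverse: "\<And>n v. g n (h n v) = v"
begin

lemma solves_gauge_transform:
  assumes "solves M z X"
  shows "solves N z (\<lambda>n. g n (X (n + s)))"
  unfolding solves_iff_sys_step
proof
  fix n
  have "X (n + s) = sys_step M z (n + s) (X (n + s + 1))"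
    using assms unfolding solves_iff_sys_step by blast
  moreover have "n + s + 1 = n + 1 + s"
    by simp
  ultimately show "g n (X (n + s)) = sys_step N z n (g (n + 1) (X (n + 1 + s)))"
    by (simp add: intertwine)
qed

lemma gauge_transform_onto:
  assumes Y: "solves N z Y"
  shows "\<exists>X. solves M z X \<and> Y = (\<lambda>n. g n (X (n + s)))"
proof (intro exI conjI)
  define X where "X m = h (m - s) (Y (m - s))" for m
  have Y_eq: "Y n = g n (X (n + s))" for n
    by (simp add: X_def right_inverse)
  then show "Y = (\<lambda>n. g n (X (n + s)))"
    by blast
  show "solves M z X"
    unfolding solves_iff_sys_step
  proof
    fix m
    define n where "n = m - s"
    have Yn: "Y n = sys_step N z n (Y (n + 1))"
      using Y unfolding solves_iff_sys_step by blast
    have "g n (sys_step M z (n + s) (X (n + 1 + s))) = sys_step N z n (Y (n + 1))"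
      by (simp add: intertwine Y_eq)
    also have "\<dots> = Y n"
      by (rule Yn[symmetric])
    also have "\<dots> = g n (X (n + s))"
      by (rule Y_eq)
    finally have "h n (g n (sys_step M z (n + s) (X (n + 1 + s)))) = h n (g n (X (n + s)))"
      by simp
    moreover have "n + s = m" and "n + 1 + s = m + 1"
      by (simp_all add: n_def)
    ultimately show "X m = sys_step M z m (X (m + 1))"
      by (simp add: left_inverse)
  qed
qed

end

lemma tendsto_mult_unimodular_zero:
  fixes f g c :: "int \<Rightarrow> complex"
  assumes "(f \<longlongrightarrow> 0) F" and "\<And>n. norm (c n) = 1" and "(g \<longlongrightarrow> L) F"
  shows "((\<lambda>n. f n * c n * g n) \<longlongrightarrow> 0) F"
proof -
  have "((\<lambda>n. norm (f n) * norm (g n)) \<longlongrightarrow> 0 * norm L) F"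
    by (intro tendsto_mult tendsto_norm assms(3)) (use tendsto_norm_zero[OF assms(1)] in simp)
  then have "((\<lambda>n. norm (f n * c n * g n)) \<longlongrightarrow> 0) F"
    by (simp add: norm_mult assms(2))
  then show ?thesis
    by (rule tendsto_norm_zero_cancel)
qed

section \<open>The products \<open>D\<close> and \<open>E\<close>\<close>

locale decaying_potentials =
  fixes q r :: "int \<Rightarrow> complex"
  assumes rapid_q: "rapid_decay q" and rapid_r: "rapid_decay r"
    and D_factor_nonzero: "\<And>n. 1 - q n * r n \<noteq> 0"
    and E_factor_nonzero: "\<And>n. 1 + q n * r (n + 1) \<noteq> 0"
begin

lemma sysQ_weight_summable: "nonneg_summable_int (sysQ_weight q r)"
  using rapid_q rapid_r by (rule nonneg_summable_sysQ_weight)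

lemma Dp_eq_prod_upto: "Dp q r = prod_upto (\<lambda>j. 1 - q j * r j)"
  by (simp add: fun_eq_iff Dp_def prod_upto_def)

lemma Ep_eq_prod_upto: "Ep q r = prod_upto (\<lambda>j. 1 + q j * r (j + 1))"
  by (simp add: fun_eq_iff Ep_def prod_upto_def)

lemma summable_D_factor: "nonneg_summable_int (\<lambda>n. norm (1 - (1 - q n * r n)))"
proof -
  have "nonneg_summable_int (\<lambda>n. norm (q n) * norm (r n))"
    using tendsto_zero_of_rapid_decay[OF rapid_r]
    by (intro nonneg_summable_int_mult_tendsto_zero nonneg_summable_int_rapid_decay rapid_q)
      (simp_all add: tendsto_norm_zero)
  then show ?thesis
    by (simp add: norm_mult)
qed

lemma summable_E_factor: "nonneg_summable_int (\<lambda>n. norm (1 - (1 + q n * r (n + 1))))"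
proof -
  have "nonneg_summable_int (\<lambda>n. norm (q n) * norm (r (n + 1)))"
    using tendsto_zero_of_rapid_decay[OF rapid_r]
    by (intro nonneg_summable_int_mult_tendsto_zero nonneg_summable_int_rapid_decay rapid_q)
      (simp_all add: tendsto_norm_zero tendsto_shift_at_top tendsto_shift_at_bot)
  then show ?thesis
    by (simp add: norm_mult)
qed

lemma Dp_nonzero: "Dp q r n \<noteq> 0"
  unfolding Dp_eq_prod_upto by (rule prod_upto_nonzero[OF D_factor_nonzero summable_D_factor])

lemma Dp_rec: "Dp q r n = (1 - q n * r n) * Dp q r (n - 1)"
  unfolding Dp_eq_prod_upto by (rule prod_upto_rec[OF D_factor_nonzero summable_D_factor])

lemma Dp_tendsto_one: "(Dp q r \<longlongrightarrow> 1) at_bot"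
  unfolding Dp_eq_prod_upto by (rule prod_upto_tendsto_one_at_bot[OF D_factor_nonzero summable_D_factor])

lemma Dp_tendsto_Dinf: "(Dp q r \<longlongrightarrow> Dinf q r) at_top"
  unfolding Dinf_def Dp_eq_prod_upto by (rule prod_upto_tendsto_at_top[OF D_factor_nonzero summable_D_factor])

lemma Dinf_nonzero: "Dinf q r \<noteq> 0"
  unfolding Dinf_def Dp_eq_prod_upto by (rule prod_upto_Lim_at_top_nonzero[OF D_factor_nonzero summable_D_factor])

lemma Ep_nonzero: "Ep q r n \<noteq> 0"
  unfolding Ep_eq_prod_upto by (rule prod_upto_nonzero[OF E_factor_nonzero summable_E_factor])

lemma Ep_rec: "Ep q r n = (1 + q n * r (n + 1)) * Ep q r (n - 1)"
  unfolding Ep_eq_prod_upto by (rule prod_upto_rec[OF E_factor_nonzero summable_E_factor])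

lemma Ep_tendsto_one: "(Ep q r \<longlongrightarrow> 1) at_bot"
  unfolding Ep_eq_prod_upto by (rule prod_upto_tendsto_one_at_bot[OF E_factor_nonzero summable_E_factor])

lemma Ep_tendsto_Einf: "(Ep q r \<longlongrightarrow> Einf q r) at_top"
  unfolding Einf_def Ep_eq_prod_upto by (rule prod_upto_tendsto_at_top[OF E_factor_nonzero summable_E_factor])

lemma Einf_nonzero: "Einf q r \<noteq> 0"
  unfolding Einf_def Ep_eq_prod_upto by (rule prod_upto_Lim_at_top_nonzero[OF E_factor_nonzero summable_E_factor])

end

section \<open>Gauge transformations from (Q) to (U)\<close>

definition gauge_uv :: "(int \<Rightarrow> complex) \<Rightarrow> (int \<Rightarrow> complex) \<Rightarrow> complex \<Rightarrow> int \<Rightarrow> complex \<times> complex \<Rightarrow> complex \<times> complex" where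
  "gauge_uv q r z n v = (Ep q r (n - 1) * fst v / (1 - inverse (z^2)),
     Dp q r (n - 1) * (snd v - r n * fst v / (1 - inverse (z^2))))"

text \<open>Applied to \<open>X (n + 1)\<close>: the \<open>(p, s)\<close> solution at \<open>n\<close> is built from the (Q) solution at
  \<open>n + 1\<close>.\<close>

definition gauge_ps :: "(int \<Rightarrow> complex) \<Rightarrow> (int \<Rightarrow> complex) \<Rightarrow> complex \<Rightarrow> int \<Rightarrow> complex \<times> complex \<Rightarrow> complex \<times> complex" where
  "gauge_ps q r z n v = (z * Ep q r (n - 1) * (fst v + q n * snd v), inverse z * Dp q r n * snd v)"

lemma gauge_uv_step_algebra:
  fixes z w q r r' D' E' x y :: complex
  assumes z: "z \<noteq> 0" and w: "w = 1 - inverse (z^2)" "w \<noteq> 0"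
    and nonzero: "D' \<noteq> 0" "E' \<noteq> 0" "1 - q * r \<noteq> 0" "1 + q * r' \<noteq> 0"
  shows "E' * (z * x + (z - inverse z) * q * y) / w
      = z * ((1 + q * r') * E' * x / w) + z * (q * E' / ((1 - q * r) * D')) * ((1 - q * r) * D' * (y - r' * x / w))"
    and "D' * (z * r * x + (inverse z + (z - inverse z) * q * r) * y - r * (z * x + (z - inverse z) * q * y) / w)
      = inverse z * ((- r + r' - q * r * r') * D' / ((1 + q * r') * E')) * ((1 + q * r') * E' * x / w)
        + inverse z * ((1 - q * r) * D' * (y - r' * x / w))"
proof -
  have zw: "z - inverse z = z * w" and iz: "inverse z = z * (1 - w)"
    using z by (simp_all add: w field_simps power2_eq_square)
  show "E' * (z * x + (z - inverse z) * q * y) / w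
      = z * ((1 + q * r') * E' * x / w) + z * (q * E' / ((1 - q * r) * D')) * ((1 - q * r) * D' * (y - r' * x / w))"
    unfolding zw using w(2) nonzero by (simp add: field_simps)
  have "((- r + r' - q * r * r') * D' / ((1 + q * r') * E')) * ((1 + q * r') * E' * x / w)
      = (- r + r' - q * r * r') * D' * x / w"
    using nonzero by simp
  moreover have "D' * (z * r * x + (inverse z + (z - inverse z) * q * r) * y - r * (z * x + (z - inverse z) * q * y) / w)
      = inverse z * ((- r + r' - q * r * r') * D' * x / w) + inverse z * ((1 - q * r) * D' * (y - r' * x / w))"
    unfolding zw iz using w(2) by (simp add: field_simps)
  ultimately show "D' * (z * r * x + (inverse z + (z - inverse z) * q * r) * y - r * (z * x + (z - inverse z) * q * y) / w)
      = inverse z * ((- r + r' - q * r * r') * D' / ((1 + q * r') * E')) * ((1 + q * r') * E' * x / w)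
        + inverse z * ((1 - q * r) * D' * (y - r' * x / w))"
    by (simp only: mult.assoc[of "inverse z"])
qed

lemma gauge_ps_step_algebra:
  fixes z q q' r' D D' E' x y :: complex
  assumes z: "z \<noteq> 0" and nonzero: "D' \<noteq> 0" "(1 + q * r') * E' \<noteq> 0"
    and D': "D' = (1 - q' * r') * D"
  shows "z * E' * ((z * x + (z - inverse z) * q' * y) + q * (z * r' * x + (inverse z + (z - inverse z) * q' * r') * y))
      = z * (z * ((1 + q * r') * E') * (x + q' * y)) + z * ((q - q' - q * q' * r') * E' / D') * (inverse z * D' * y)"
    and "inverse z * D * (z * r' * x + (inverse z + (z - inverse z) * q' * r') * y)
      = inverse z * (r' * D / ((1 + q * r') * E')) * (z * ((1 + q * r') * E') * (x + q' * y))
        + inverse z * (inverse z * D' * y)"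
proof -
  show "z * E' * ((z * x + (z - inverse z) * q' * y) + q * (z * r' * x + (inverse z + (z - inverse z) * q' * r') * y))
      = z * (z * ((1 + q * r') * E') * (x + q' * y)) + z * ((q - q' - q * q' * r') * E' / D') * (inverse z * D' * y)"
    using z nonzero(1) by (simp add: field_simps)
  have "(r' * D / ((1 + q * r') * E')) * (z * ((1 + q * r') * E') * (x + q' * y)) = r' * D * z * (x + q' * y)"
    using nonzero(2) by simp
  moreover have "inverse z * D * (z * r' * x + (inverse z + (z - inverse z) * q' * r') * y)
      = inverse z * (r' * D * z * (x + q' * y)) + inverse z * (inverse z * D' * y)"
    unfolding D' using z by (simp add: field_simps)
  ultimately show "inverse z * D * (z * r' * x + (inverse z + (z - inverse z) * q' * r') * y)
      = inverse z * (r' * D / ((1 + q * r') * E')) * (z * ((1 + q * r') * E') * (x + q' * y))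
        + inverse z * (inverse z * D' * y)"
    by (simp only: mult.assoc[of "inverse z"])
qed

context decaying_potentials
begin

context
  fixes z :: complex
  assumes z: "z \<noteq> 0" and z2: "z^2 \<noteq> 1"
begin

lemma one_minus_inverse_square_nonzero: "1 - inverse (z^2) \<noteq> 0"
  using z2 by (auto simp: field_simps)

lemma gauge_uv_intertwines:
  "gauge_uv q r z n (sys_step (sysQ q r) z n v)
    = sys_step (sysU (uu q r) (vv q r)) z n (gauge_uv q r z (n + 1) v)"
proof -
  have D: "Dp q r n = (1 - q n * r n) * Dp q r (n - 1)" and E: "Ep q r n = (1 + q n * r (n + 1)) * Ep q r (n - 1)"
    by (rule Dp_rec, rule Ep_rec)
  then have "Dp q r (n - 1) \<noteq> 0" "Ep q r (n - 1) \<noteq> 0" "1 - q n * r n \<noteq> 0" "1 + q n * r (n + 1) \<noteq> 0"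
    using Dp_nonzero[of n] Ep_nonzero[of n] by auto
  note alg = gauge_uv_step_algebra[OF z refl one_minus_inverse_square_nonzero this, of "fst v" "snd v"]
  show ?thesis
    unfolding gauge_uv_def sys_step_def sysQ_def sysU_def uu_def vv_def D E prod.case fst_conv snd_conv
      add_diff_cancel_right'
    using alg by simp
qed

lemma gauge_ps_intertwines:
  "gauge_ps q r z n (sys_step (sysQ q r) z (n + 1) v)
    = sys_step (sysU (pp q r) (ss q r)) z n (gauge_ps q r z (n + 1) v)"
proof -
  have D: "Dp q r (n + 1) = (1 - q (n + 1) * r (n + 1)) * Dp q r n"
    using Dp_rec[of "n + 1"] by simp
  have E: "Ep q r n = (1 + q n * r (n + 1)) * Ep q r (n - 1)"
    by (rule Ep_rec)
  then have "(1 + q n * r (n + 1)) * Ep q r (n - 1) \<noteq> 0"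
    using Ep_nonzero[of n] by simp
  note alg = gauge_ps_step_algebra[OF z Dp_nonzero[of "n + 1"] this D, of "fst v" "snd v"]
  show ?thesis
    unfolding gauge_ps_def sys_step_def sysQ_def sysU_def pp_def ss_def prod.case fst_conv snd_conv
      add_diff_cancel_right'
    using alg E by simp
qed

lemma solves_gauge_uv:
  "solves (sysQ q r) z X \<Longrightarrow> solves (sysU (uu q r) (vv q r)) z (\<lambda>n. gauge_uv q r z n (X n))"
  "solves (sysU (uu q r) (vv q r)) z Y \<Longrightarrow> \<exists>X. solves (sysQ q r) z X \<and> Y = (\<lambda>n. gauge_uv q r z n (X n))"
proof -
  define w where "w = 1 - inverse (z^2)"
  define h where "h n v = (w * fst v / Ep q r (n - 1), snd v / Dp q r (n - 1) + r n * fst v / Ep q r (n - 1))"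
    for n v
  have "w \<noteq> 0"
    using one_minus_inverse_square_nonzero by (simp add: w_def)
  have left: "h n (gauge_uv q r z n v) = v" and right: "gauge_uv q r z n (h n v) = v" for n v
    unfolding h_def gauge_uv_def w_def[symmetric]
    using \<open>w \<noteq> 0\<close> Dp_nonzero[of "n - 1"] Ep_nonzero[of "n - 1"]
    by (simp_all add: prod_eq_iff field_simps)
  have "gauge_uv q r z n (sys_step (sysQ q r) z (n + 0) v)
      = sys_step (sysU (uu q r) (vv q r)) z n (gauge_uv q r z (n + 1) v)" for n v
    by (simp add: gauge_uv_intertwines)
  from solves_gauge_transform[OF this left right] gauge_transform_onto[OF this left right]
  show "solves (sysQ q r) z X \<Longrightarrow> solves (sysU (uu q r) (vv q r)) z (\<lambda>n. gauge_uv q r z n (X n))"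
    and "solves (sysU (uu q r) (vv q r)) z Y \<Longrightarrow> \<exists>X. solves (sysQ q r) z X \<and> Y = (\<lambda>n. gauge_uv q r z n (X n))"
    by simp_all
qed

lemma solves_gauge_ps:
  "solves (sysQ q r) z X \<Longrightarrow> solves (sysU (pp q r) (ss q r)) z (\<lambda>n. gauge_ps q r z n (X (n + 1)))"
  "solves (sysU (pp q r) (ss q r)) z Y
    \<Longrightarrow> \<exists>X. solves (sysQ q r) z X \<and> Y = (\<lambda>n. gauge_ps q r z n (X (n + 1)))"
proof -
  define h where "h n v = (fst v / (z * Ep q r (n - 1)) - q n * z * snd v / Dp q r n, z * snd v / Dp q r n)"
    for n v
  have left: "h n (gauge_ps q r z n v) = v" and right: "gauge_ps q r z n (h n v) = v" for n v
    unfolding h_def gauge_ps_def using z Dp_nonzero[of n] Ep_nonzero[of "n - 1"]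
    by (simp_all add: prod_eq_iff field_simps)
  from solves_gauge_transform[OF gauge_ps_intertwines left right]
    gauge_transform_onto[OF gauge_ps_intertwines left right]
  show "solves (sysQ q r) z X \<Longrightarrow> solves (sysU (pp q r) (ss q r)) z (\<lambda>n. gauge_ps q r z n (X (n + 1)))"
    and "solves (sysU (pp q r) (ss q r)) z Y
      \<Longrightarrow> \<exists>X. solves (sysQ q r) z X \<and> Y = (\<lambda>n. gauge_ps q r z n (X (n + 1)))"
    by simp_all
qed

lemma powi_succ: "z powi (n + 1) = z powi n * z"
  by (rule power_int_add_1) (use z in simp)

lemma powi_neg_succ: "z powi (- (n + 1)) = inverse (z powi n) * inverse z"
  unfolding power_int_minus[of z "n + 1"] powi_succ by (rule inverse_mult_distrib)

lemma nfst_gauge_uv: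
  "nfst z (\<lambda>n. gauge_uv q r z n (X n)) n = Ep q r (n - 1) / (1 - inverse (z^2)) * nfst z X n"
  by (simp add: nfst_def gauge_uv_def)

lemma nsnd_gauge_uv:
  "nsnd z (\<lambda>n. gauge_uv q r z n (X n)) n
    = Dp q r (n - 1) * (nsnd z X n - r n * (inverse (z powi n))^2 * nfst z X n / (1 - inverse (z^2)))"
proof -
  define p where "p = z powi n"
  define w where "w = 1 - inverse (z^2)"
  have "p \<noteq> 0" and "w \<noteq> 0"
    using z one_minus_inverse_square_nonzero by (simp_all add: p_def w_def)
  then show ?thesis
    unfolding nsnd_def nfst_def gauge_uv_def snd_conv power_int_minus p_def[symmetric] w_def[symmetric]
    by (simp add: field_simps power2_eq_square)
qed

lemma nfst_gauge_ps:
  "nfst z (\<lambda>n. gauge_ps q r z n (X (n + 1))) n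
    = Ep q r (n - 1) * (nfst z X (n + 1) + q n * (z powi (n + 1))^2 * nsnd z X (n + 1))"
  unfolding nfst_def nsnd_def gauge_ps_def fst_conv powi_succ powi_neg_succ
  using z by (simp add: field_simps power2_eq_square)

lemma nsnd_gauge_ps: "nsnd z (\<lambda>n. gauge_ps q r z n (X (n + 1))) n = Dp q r n * nsnd z X (n + 1)"
  unfolding nsnd_def gauge_ps_def snd_conv powi_neg_succ power_int_minus[of z n]
  using z by (simp add: field_simps)

end

end

context decaying_potentials
begin

context
  fixes z :: complex
  assumes norm_z: "norm z = 1" and z2: "z^2 \<noteq> 1"
begin

lemma z_nonzero: "z \<noteq> 0"
  using norm_z by auto

lemma sysQ_jost_properties:
  "has_jost_solutions (sysQ q r) z"
  "normalized_limits_exist (sysQ q r) z at_top" "normalized_limits_exist (sysQ q r) z at_bot"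
  "determined_by_limits (sysQ q r) z at_top" "determined_by_limits (sysQ q r) z at_bot"
  using sysQ_has_jost_solutions[OF norm_z sysQ_weight_summable]
    sysQ_normalized_limits_exist[OF norm_z sysQ_weight_summable]
    sysQ_determined_by_limits[OF norm_z sysQ_weight_summable]
  by simp_all

lemma gauge_uv_limits:
  assumes "(nfst z X \<longlongrightarrow> a) F" and "(nsnd z X \<longlongrightarrow> b) F"
    and "((\<lambda>n. Ep q r (n - 1)) \<longlongrightarrow> e) F" and "((\<lambda>n. Dp q r (n - 1)) \<longlongrightarrow> d) F" and "(r \<longlongrightarrow> 0) F"
  shows "(nfst z (\<lambda>n. gauge_uv q r z n (X n)) \<longlongrightarrow> e / (1 - inverse (z^2)) * a) F
    \<and> (nsnd z (\<lambda>n. gauge_uv q r z n (X n)) \<longlongrightarrow> d * b) F"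
proof
  show "(nfst z (\<lambda>n. gauge_uv q r z n (X n)) \<longlongrightarrow> e / (1 - inverse (z^2)) * a) F"
    unfolding nfst_gauge_uv[OF z_nonzero z2, abs_def]
    using one_minus_inverse_square_nonzero[OF z_nonzero z2] by (intro tendsto_intros assms)
  have "((\<lambda>n. r n * (inverse (z powi n))^2 * nfst z X n) \<longlongrightarrow> 0) F"
    using norm_z by (intro tendsto_mult_unimodular_zero[OF assms(5) _ assms(1)])
      (simp add: norm_power norm_inverse norm_power_int)
  from tendsto_mult[OF assms(4) tendsto_diff[OF assms(2) tendsto_divide_zero[OF this]]]
  show "(nsnd z (\<lambda>n. gauge_uv q r z n (X n)) \<longlongrightarrow> d * b) F"
    unfolding nsnd_gauge_uv[OF z_nonzero z2, abs_def] by simp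
qed

lemma gauge_ps_limits:
  assumes "((\<lambda>n. nfst z X (n + 1)) \<longlongrightarrow> a) F" and "((\<lambda>n. nsnd z X (n + 1)) \<longlongrightarrow> b) F"
    and "((\<lambda>n. Ep q r (n - 1)) \<longlongrightarrow> e) F" and "(Dp q r \<longlongrightarrow> d) F" and "(q \<longlongrightarrow> 0) F"
  shows "(nfst z (\<lambda>n. gauge_ps q r z n (X (n + 1))) \<longlongrightarrow> e * a) F
    \<and> (nsnd z (\<lambda>n. gauge_ps q r z n (X (n + 1))) \<longlongrightarrow> d * b) F"
proof
  have "((\<lambda>n. q n * (z powi (n + 1))^2 * nsnd z X (n + 1)) \<longlongrightarrow> 0) F"
    using norm_z by (intro tendsto_mult_unimodular_zero[OF assms(5) _ assms(2)])
      (simp add: norm_power norm_power_int)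
  from tendsto_mult[OF assms(3) tendsto_add[OF assms(1) this]]
  show "(nfst z (\<lambda>n. gauge_ps q r z n (X (n + 1))) \<longlongrightarrow> e * a) F"
    unfolding nfst_gauge_ps[OF z_nonzero z2, abs_def] by simp
  show "(nsnd z (\<lambda>n. gauge_ps q r z n (X (n + 1))) \<longlongrightarrow> d * b) F"
    unfolding nsnd_gauge_ps[OF z_nonzero z2, abs_def] by (intro tendsto_intros assms)
qed

lemma Ep_pred_tendsto: "((\<lambda>n. Ep q r (n - 1)) \<longlongrightarrow> Einf q r) at_top" "((\<lambda>n. Ep q r (n - 1)) \<longlongrightarrow> 1) at_bot"
  using tendsto_shift_at_top[OF Ep_tendsto_Einf, of "- 1"] tendsto_shift_at_bot[OF Ep_tendsto_one, of "- 1"]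
  by simp_all

lemma Dp_pred_tendsto: "((\<lambda>n. Dp q r (n - 1)) \<longlongrightarrow> Dinf q r) at_top" "((\<lambda>n. Dp q r (n - 1)) \<longlongrightarrow> 1) at_bot"
  using tendsto_shift_at_top[OF Dp_tendsto_Dinf, of "- 1"] tendsto_shift_at_bot[OF Dp_tendsto_one, of "- 1"]
  by simp_all

lemma scattering_gauge_uv:
  "scattering_gauge (sysQ q r) (sysU (uu q r) (vv q r)) z (\<lambda>X n. gauge_uv q r z n (X n))
     (Einf q r / (1 - inverse (z^2))) (Dinf q r) (1 / (1 - inverse (z^2))) 1"
proof (unfold_locales; (rule norm_z sysQ_jost_properties solves_gauge_uv[OF z_nonzero z2])?)
  show "(\<lambda>n. gauge_uv q r z n (0, 0)) = (\<lambda>_. (0, 0))"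
    by (simp add: gauge_uv_def)
  show "(nfst z (\<lambda>n. gauge_uv q r z n (X n)) \<longlongrightarrow> Einf q r / (1 - inverse (z^2)) * a) at_top
      \<and> (nsnd z (\<lambda>n. gauge_uv q r z n (X n)) \<longlongrightarrow> Dinf q r * b) at_top"
    if "(nfst z X \<longlongrightarrow> a) at_top" "(nsnd z X \<longlongrightarrow> b) at_top" for X a b
    using tendsto_zero_of_rapid_decay(1)[OF rapid_r]
    by (rule gauge_uv_limits[OF that Ep_pred_tendsto(1) Dp_pred_tendsto(1)])
  show "(nfst z (\<lambda>n. gauge_uv q r z n (X n)) \<longlongrightarrow> 1 / (1 - inverse (z^2)) * a) at_bot
      \<and> (nsnd z (\<lambda>n. gauge_uv q r z n (X n)) \<longlongrightarrow> 1 * b) at_bot"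
    if "(nfst z X \<longlongrightarrow> a) at_bot" "(nsnd z X \<longlongrightarrow> b) at_bot" for X a b
    using tendsto_zero_of_rapid_decay(2)[OF rapid_r]
    by (rule gauge_uv_limits[OF that Ep_pred_tendsto(2) Dp_pred_tendsto(2)])
qed (use Einf_nonzero Dinf_nonzero one_minus_inverse_square_nonzero[OF z_nonzero z2] in simp_all)

lemma scattering_gauge_ps:
  "scattering_gauge (sysQ q r) (sysU (pp q r) (ss q r)) z (\<lambda>X n. gauge_ps q r z n (X (n + 1)))
     (Einf q r) (Dinf q r) 1 1"
proof (unfold_locales; (rule norm_z sysQ_jost_properties solves_gauge_ps[OF z_nonzero z2])?)
  show "(\<lambda>n. gauge_ps q r z n (0, 0)) = (\<lambda>_. (0, 0))"
    by (simp add: gauge_ps_def)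
  show "(nfst z (\<lambda>n. gauge_ps q r z n (X (n + 1))) \<longlongrightarrow> Einf q r * a) at_top
      \<and> (nsnd z (\<lambda>n. gauge_ps q r z n (X (n + 1))) \<longlongrightarrow> Dinf q r * b) at_top"
    if "(nfst z X \<longlongrightarrow> a) at_top" "(nsnd z X \<longlongrightarrow> b) at_top" for X a b
    using tendsto_zero_of_rapid_decay(1)[OF rapid_q]
    by (rule gauge_ps_limits[OF that[THEN tendsto_shift_at_top] Ep_pred_tendsto(1) Dp_tendsto_Dinf])
  show "(nfst z (\<lambda>n. gauge_ps q r z n (X (n + 1))) \<longlongrightarrow> 1 * a) at_bot
      \<and> (nsnd z (\<lambda>n. gauge_ps q r z n (X (n + 1))) \<longlongrightarrow> 1 * b) at_bot"
    if "(nfst z X \<longlongrightarrow> a) at_bot" "(nsnd z X \<longlongrightarrow> b) at_bot" for X a b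
    using tendsto_zero_of_rapid_decay(2)[OF rapid_q]
    by (rule gauge_ps_limits[OF that[THEN tendsto_shift_at_bot] Ep_pred_tendsto(2) Dp_tendsto_one])
qed (use Einf_nonzero Dinf_nonzero in simp_all)

end

end

theorem theorem3p4:
  fixes q r :: "int \<Rightarrow> complex" and z :: complex
  assumes "rapid_decay q" and "rapid_decay r"
    and "\<And>n. 1 - q n * r n \<noteq> 0" and "\<And>n. 1 + q n * r (n+1) \<noteq> 0"
    and "norm z = 1" and "z\<^sup>2 \<noteq> 1"
  defines "Q \<equiv> sysQ q r"
    and "UV \<equiv> sysU (uu q r) (vv q r)"
    and "PS \<equiv> sysU (pp q r) (ss q r)"
    and "D \<equiv> Dinf q r" and "E \<equiv> Einf q r"
    and "T \<equiv> Tl (sysQ q r) z" and "Tb \<equiv> Tlbar (sysQ q r) z"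
  shows "Tl UV z = D * T \<and> Tl PS z = D * T
    \<and> Tr UV z = T / E \<and> Tr PS z = T / E
    \<and> Tlbar UV z = E * Tb \<and> Tlbar PS z = E * Tb
    \<and> Trbar UV z = Tb / D \<and> Trbar PS z = Tb / D
    \<and> Rc UV z = (1 - z powi (-2)) * (D / E) * Rc Q z
    \<and> Rc PS z = (D / E) * Rc Q z
    \<and> Rbar UV z = 1 / (1 - z powi (-2)) * (E / D) * Rbar Q z
    \<and> Rbar PS z = (E / D) * Rbar Q z
    \<and> Lc UV z = 1 / (1 - z powi (-2)) * Lc Q z
    \<and> Lc PS z = Lc Q z
    \<and> Lbar UV z = (1 - z powi (-2)) * Lbar Q z
    \<and> Lbar PS z = Lbar Q z"
proof -
  interpret decaying_potentials q r
    using assms(1-4) by unfold_locales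
  define w where "w = 1 - inverse (z^2)"
  have z: "z \<noteq> 0" and "w \<noteq> 0" and w: "1 - z powi (-2) = w"
    using assms(5,6) one_minus_inverse_square_nonzero[OF z_nonzero[OF assms(5,6)] assms(6)]
    by (auto simp: w_def power_int_minus)
  have "D \<noteq> 0" and "E \<noteq> 0"
    unfolding assms(10,11) by (rule Dinf_nonzero Einf_nonzero)+
  interpret UV: scattering_gauge Q UV z "\<lambda>X n. gauge_uv q r z n (X n)" "E / w" D "1 / w" 1
    unfolding assms(7-11) w_def using assms(5,6) by (rule scattering_gauge_uv)
  interpret PS: scattering_gauge Q PS z "\<lambda>X n. gauge_ps q r z n (X (n + 1))" E D 1 1
    unfolding assms(7-11) using assms(5,6) by (rule scattering_gauge_ps)
  note Q_facts = assms(5) sysQ_unimodular[OF z] sysQ_jost_properties(1-3)[OF assms(5,6)]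
  have transmission_Q: "Tl Q z = T" "Tr Q z = T" "Tlbar Q z = Tb" "Trbar Q z = Tb"
    unfolding assms(7,12,13) unimodular_Tr_eq_Tl[OF Q_facts] unimodular_Trbar_eq_Tlbar[OF Q_facts]
    by simp_all
  show ?thesis
    unfolding w UV.Tl_Lc_transfer UV.Tr_Rc_transfer UV.Tlbar_Lbar_transfer UV.Trbar_Rbar_transfer
      PS.Tl_Lc_transfer PS.Tr_Rc_transfer PS.Tlbar_Lbar_transfer PS.Trbar_Rbar_transfer transmission_Q
    using \<open>w \<noteq> 0\<close> \<open>D \<noteq> 0\<close> \<open>E \<noteq> 0\<close> by simp
qed

end
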